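(* Let $(\Omega,\mu)$ be a probability space and $T:\Omega\to\Omega$ an ergodic measure-preserving map. Let $a:\mathbb{N}\times\Omega\to\mathbb{R}$ be a measurable function with $a(0,\omega)\equiv 0$ such that $a(n+m,\omega)\leq a(n,\omega)+a(m,T^n\omega)$ for all integers $n,m>0$ and a.e. $\omega$, and such that $\omega\mapsto a(1,\omega)$ is integrable. Let $A=\inf_n \frac{1}{n}\int_\Omega a(n,\omega)\,d\mu$ and assume $A$ is finite. Fix $\rho>0$. Then there exist a sequence of positive reals $\delta_\ell\to 0$ (independent of $\omega$) and a measurable set $O\subset\Omega$ with $\mu(O)\geq 1-\rho$ such that for every $\omega\in O$ the set $$A(\omega)=\{n\in\mathbb{N}:\ \left|a(n,\omega)-a(n-\ell,T^\ell\omega)-A\ell\right|\leq \ell\,\delta_\ell \text{ for all } 1\le \ell\leq n\}$$ has upper asymptotic density at least $1-\rho$.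
   Context: The upper asymptotic density of $U\subset\mathbb{N}$ is $\limsup_{N\to\infty}\#(U\cap[0,N-1])/N$. *)

theory Defs
  imports "HOL-Probability.Probability"
begin

definition measure_preserving_map :: "'a measure \<Rightarrow> ('a \<Rightarrow> 'a) \<Rightarrow> bool" where
  "measure_preserving_map M T \<longleftrightarrow> T \<in> measurable M M \<and> distr M M T = M"

definition ergodic_map :: "'a measure \<Rightarrow> ('a \<Rightarrow> 'a) \<Rightarrow> bool" where
  "ergodic_map M T \<longleftrightarrow> measure_preserving_map M T \<and>
     (\<forall>B \<in> sets M. T -` B \<inter> space M = B \<longrightarrow> measure M B = 0 \<or> measure M B = 1)"

text \<open>Extended-real valued integral: integral of positive part minus integral of
  negative part (well defined whenever the positive part is integrable).\<close>
definition ext_integral :: "'a measure \<Rightarrow> ('a \<Rightarrow> real) \<Rightarrow> ereal" where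
  "ext_integral M f = enn2ereal (\<integral>\<^sup>+ x. ennreal (f x) \<partial>M) - enn2ereal (\<integral>\<^sup>+ x. ennreal (- f x) \<partial>M)"

definition upper_density :: "nat set \<Rightarrow> ereal" where
  "upper_density U = limsup (\<lambda>N. ereal (real (card (U \<inter> {0..<N})) / real N))"

end

theory Submission
  imports Defs
begin

text \<open>
  Subtracting \<open>n A\<close> turns \<open>a\<close> into a subadditive cocycle with \<open>\<integral>a\<^sub>n \<ge> 0\<close> and
  \<open>inf\<^sub>n \<integral>a\<^sub>n / n = 0\<close>. The ergodic theorem (from the maximal ergodic inequality) applied to
  blocks of a fixed length gives \<open>a\<^sub>n \<le> \<epsilon> n\<close> for all large \<open>n\<close> almost everywhere; this
  bounds the upward deviations \<open>a\<^sub>n(\<omega>) - a\<^sub>n\<^sub>-\<^sub>l(T\<^sup>l \<omega>) \<le> a\<^sub>l(\<omega>)\<close>.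

  For the downward deviations call \<open>j\<close> a drop time if \<open>a\<^sub>n\<^sub>-\<^sub>j(T\<^sup>j \<omega>)\<close> lies below
  \<open>a\<^sub>n\<^sub>-\<^sub>j\<^sub>-\<^sub>l(T\<^sup>j\<^sup>+\<^sup>l \<omega>) - \<tau> l\<close> for some \<open>l \<ge> L\<close>. Walking along the orbit, jumping
  over drops and otherwise paying only \<open>\<epsilon>\<close> per step plus a Birkhoff sum of a control function
  of small integral, gives \<open>a\<^sub>n(\<omega>) \<le> -\<tau>/2 \<cdot> #drop times + o(n)\<close>. Integrating against
  \<open>\<integral>a\<^sub>n \<ge> 0\<close> shows that drop times have small expected density once \<open>L\<close> is large.
  Choosing thresholds \<open>L\<^sub>i\<close> for the tolerances \<open>1/(i+1)\<close> with summable error budgets, and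
  letting \<open>\<delta>\<^sub>l\<close> be the finest tolerance whose threshold is at most \<open>l\<close>, Fatou's lemma and
  Markov's inequality bound the measure of the points at which the bad times have lower density
  at least \<open>\<rho>\<close>.
\<close>

lemma sum_residue_classes:
  fixes G :: "nat \<Rightarrow> real"
  assumes K: "0 < K"
  shows "(\<Sum>p<K. \<Sum>q<(n - p) div K. G (p + q * K)) = (\<Sum>b\<in>{b. b + K \<le> n}. G b)"
proof -
  have "(\<Sum>p<K. \<Sum>q<(n - p) div K. G (p + q * K)) =
        (\<Sum>(p, q)\<in>(SIGMA p:{..<K}. {..<(n - p) div K}). G (p + q * K))"
    by (rule sum.Sigma) auto
  also have "\<dots> = (\<Sum>b\<in>{b. b + K \<le> n}. G b)"
  proof (rule sum.reindex_bij_witness[where j = "\<lambda>(p, q). p + q * K" and i = "\<lambda>b. (b mod K, b div K)"])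
    fix pq assume "pq \<in> (SIGMA p:{..<K}. {..<(n - p) div K})"
    then obtain p q where pq: "pq = (p, q)" "p < K" "q < (n - p) div K" by auto
    then have "Suc q * K \<le> n - p"
      using less_eq_div_iff_mult_less_eq[OF K, of "Suc q" "n - p"] by simp
    then show "(case pq of (p, q) \<Rightarrow> p + q * K) \<in> {b. b + K \<le> n}" using pq by auto
  next
    fix b assume "b \<in> {b. b + K \<le> n}"
    then have "Suc (b div K) * K + b mod K \<le> n"
      using div_mult_mod_eq[of b K] by simp
    then have "Suc (b div K) * K \<le> n - b mod K" by linarith
    then have "b div K < (n - b mod K) div K"
      using less_eq_div_iff_mult_less_eq[OF K, of "Suc (b div K)" "n - b mod K"] by simp
    then show "(b mod K, b div K) \<in> (SIGMA p:{..<K}. {..<(n - p) div K})" using K by simp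
  qed auto
  finally show ?thesis .
qed

text \<open>The greedy walk along the orbit of \<open>\<omega>\<close> behind \<open>a_le_card_drops\<close>, abstracted: \<open>G j\<close> stands
  for \<open>a (n - j) ((T ^^ j) \<omega>)\<close> minus its allowed growth. From a time in \<open>B\<close> the walk jumps over a
  drop, gaining \<open>\<tau> l \<ge> \<tau> L\<close>; from any other time it runs to the next time in \<open>B\<close> (or to \<open>n\<close>), paying
  \<open>C\<close>. Half of each gain pays for the following run; the other half is counted for every time it jumps
  over.\<close>
lemma greedy_drop_bound:
  fixes G :: "nat \<Rightarrow> real"
  assumes end_point: "G n \<le> 0"
    and drop: "\<And>j. j < n \<Longrightarrow> j \<in> B \<Longrightarrow> \<exists>l\<ge>L. j + l \<le> n \<and> G j \<le> G (j + l) - \<tau> * real l"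
    and run: "\<And>j k. j \<le> k \<Longrightarrow> k \<le> n \<Longrightarrow> G j \<le> G k + C"
    and L: "1 \<le> L" and tau: "0 < \<tau>" and C: "0 \<le> C" "2 * C \<le> \<tau> * real L"
  shows "G 0 \<le> - (\<tau> / 2) * real (card {j. j < n \<and> j \<in> B}) + C"
proof -
  define \<beta> where "\<beta> j = card {i. j \<le> i \<and> i < n \<and> i \<in> B}" for j
  define Q where "Q j \<longleftrightarrow> G j \<le> - (\<tau> / 2) * real (\<beta> j) + (if j \<in> B \<or> j = n then 0 else C)" for j
  have "Q j" if "j \<le> n" for j
    using that
  proof (induction j rule: measure_induct_rule[where f = "\<lambda>j. n - j"])
    case (less j)
    consider "j = n" | "j < n" "j \<in> B" | "j < n" "j \<notin> B" using less.prems by linarith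
    then show ?case
    proof cases
      case 1
      then have "\<beta> j = 0" unfolding \<beta>_def by auto
      then show ?thesis unfolding Q_def using 1 end_point by simp
    next
      case 2
      then obtain l where l: "L \<le> l" "j + l \<le> n" "G j \<le> G (j + l) - \<tau> * real l"
        using drop by blast
      then have "Q (j + l)" using less.IH L by simp
      then have "G (j + l) \<le> - (\<tau> / 2) * real (\<beta> (j + l)) + C"
        unfolding Q_def using C by (auto split: if_splits)
      moreover have "\<beta> j \<le> \<beta> (j + l) + l"
      proof -
        have "{i. j \<le> i \<and> i < n \<and> i \<in> B} \<subseteq> {j..<j + l} \<union> {i. j + l \<le> i \<and> i < n \<and> i \<in> B}"
          by auto
        then have "\<beta> j \<le> card ({j..<j + l} \<union> {i. j + l \<le> i \<and> i < n \<and> i \<in> B})"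
          unfolding \<beta>_def by (intro card_mono) auto
        also have "\<dots> \<le> card {j..<j + l} + \<beta> (j + l)" unfolding \<beta>_def by (rule card_Un_le)
        finally show ?thesis by simp
      qed
      then have "(\<tau> / 2) * real (\<beta> j) \<le> (\<tau> / 2) * (real (\<beta> (j + l)) + real l)"
        using tau by (intro mult_left_mono) auto
      moreover have "\<tau> * real L \<le> \<tau> * real l" using l(1) tau by (intro mult_left_mono) auto
      ultimately show ?thesis unfolding Q_def using 2 l(3) C by (simp add: algebra_simps)
    next
      case 3
      define P where "P k \<longleftrightarrow> j < k \<and> k \<le> n \<and> (k \<in> B \<or> k = n)" for k
      define k where "k = (LEAST k. P k)"
      have "P n" unfolding P_def using 3 by simp
      then have k: "j < k" "k \<le> n" "k \<in> B \<or> k = n" using LeastI[of P n] unfolding k_def P_def by auto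
      have "i \<notin> B" if "j \<le> i" "i < k" for i
        using 3 not_less_Least[of i P] that k unfolding k_def P_def by (cases "i = j") auto
      then have "\<beta> j = \<beta> k"
        unfolding \<beta>_def using k by (intro arg_cong[where f = card]) (auto simp: not_le[symmetric])
      moreover have "Q k" using less.IH k by simp
      ultimately show ?thesis unfolding Q_def using run[of j k] k 3 by auto
    qed
  qed
  then have "Q 0" by simp
  moreover have "\<beta> 0 = card {j. j < n \<and> j \<in> B}" unfolding \<beta>_def by simp
  ultimately show ?thesis unfolding Q_def using C by (auto split: if_splits)
qed

lemma card_eq_sum_indicator:
  fixes n :: nat
  shows "real (card {j. j < n \<and> x \<in> A j}) = (\<Sum>j<n. indicator (A j) x)"
proof -
  have "{j. j < n \<and> x \<in> A j} = {j \<in> {..<n}. x \<in> A j}" by auto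
  then have "real (card {j. j < n \<and> x \<in> A j}) = (\<Sum>j\<in>{j \<in> {..<n}. x \<in> A j}. 1)" by simp
  also have "\<dots> = (\<Sum>j<n. if x \<in> A j then 1 else 0)" by (rule sum.inter_filter) simp
  also have "\<dots> = (\<Sum>j<n. indicator (A j) x)" unfolding indicator_def of_bool_def ..
  finally show ?thesis .
qed

definition tolerance :: "real \<Rightarrow> (nat \<Rightarrow> nat) \<Rightarrow> nat \<Rightarrow> real" where
  "tolerance D L l = Min (insert D ((\<lambda>i. 1 / real (Suc i)) ` {i. i < l \<and> L i \<le> l}))"

lemma tolerance_cases:
  "tolerance D L l = D \<or> (\<exists>i<l. L i \<le> l \<and> tolerance D L l = 1 / real (Suc i))"
proof -
  have "tolerance D L l \<in> insert D ((\<lambda>i. 1 / real (Suc i)) ` {i. i < l \<and> L i \<le> l})"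
    unfolding tolerance_def by (rule Min_in) auto
  then show ?thesis by auto
qed

lemma tolerance_pos: "0 < D \<Longrightarrow> 0 < tolerance D L l"
  using tolerance_cases[of D L l] by auto

lemma tolerance_le: "i < l \<Longrightarrow> L i \<le> l \<Longrightarrow> tolerance D L l \<le> 1 / real (Suc i)"
  unfolding tolerance_def by (rule Min_le) auto

lemma tolerance_tendsto_0:
  assumes "0 < D"
  shows "tolerance D L \<longlonglongrightarrow> 0"
proof (rule LIMSEQ_I)
  fix r :: real assume r: "0 < r"
  obtain i :: nat where i: "1 / r < real i" using reals_Archimedean2 by blast
  then have "1 / real (Suc i) < r" using r by (simp add: field_simps)
  then have "norm (tolerance D L l - 0) < r" if "l \<ge> Suc i + L i" for l
    using that tolerance_le[of i l L D] tolerance_pos[OF assms, of L l] by simp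
  then show "\<exists>no. \<forall>n\<ge>no. norm (tolerance D L n - 0) < r" by blast
qed

lemma upper_density_ge_of_liminf_compl_less:
  fixes S :: "nat set"
  assumes lim: "liminf (\<lambda>N. ennreal (real (card ({..<N} - S)) / real N)) < ennreal \<rho>"
  shows "ereal (1 - \<rho>) \<le> upper_density S"
proof (rule ccontr)
  assume "\<not> ereal (1 - \<rho>) \<le> upper_density S"
  then have ev: "eventually (\<lambda>N. ereal (real (card (S \<inter> {0..<N})) / real N) < ereal (1 - \<rho>)) sequentially"
    unfolding upper_density_def not_le by (rule Limsup_lessD)
  have fr: "frequently (\<lambda>N. ennreal (real (card ({..<N} - S)) / real N) < ennreal \<rho>) sequentially"
  proof (rule ccontr)
    assume "\<not> ?thesis"
    then have "eventually (\<lambda>N. ennreal \<rho> \<le> ennreal (real (card ({..<N} - S)) / real N)) sequentially"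
      unfolding not_frequently by (simp add: not_less)
    from Liminf_bounded[OF this] show False using lim by simp
  qed
  have "frequently (\<lambda>N. 0 < N \<and> (ennreal (real (card ({..<N} - S)) / real N) < ennreal \<rho> \<and>
        ereal (real (card (S \<inter> {0..<N})) / real N) < ereal (1 - \<rho>))) sequentially"
    using frequently_eventually_conj[OF fr ev] eventually_gt_at_top[of 0]
    by (rule frequently_eventually_conj[THEN frequently_elim1]) auto
  then obtain N where N: "0 < N" "real (card ({..<N} - S)) / real N < \<rho>"
    "real (card (S \<inter> {0..<N})) / real N < 1 - \<rho>"
    by (auto dest: frequently_ex simp: ennreal_less_iff)
  have "card (S \<inter> {0..<N}) + card ({..<N} - S) = N"
    by (subst card_Un_disjoint[symmetric]) (auto intro: arg_cong[where f = card, of _ "{..<N}", simplified])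
  then have "real (card (S \<inter> {0..<N})) / real N + real (card ({..<N} - S)) / real N = 1"
    using N(1) by (simp add: field_simps flip: of_nat_add)
  then show False using N(2,3) by linarith
qed

text \<open>Fatou's lemma combined with Markov's inequality.\<close>
lemma (in prob_space) prob_liminf_frequency_ge:
  fixes B :: "nat \<Rightarrow> 'a set"
  assumes B: "\<And>m. B m \<in> events" and bound: "\<And>N. (\<Sum>m<N. prob (B m)) \<le> \<eta> * real N + C"
    and \<eta>: "0 \<le> \<eta>" and \<rho>: "0 < \<rho>"
  shows "prob {x \<in> space M. ennreal \<rho> \<le> liminf (\<lambda>N. ennreal (real (card {m. m < N \<and> x \<in> B m}) / real N))}
           \<le> \<eta> / \<rho>"
proof -
  define f where "f N x = ennreal (real (card {m. m < N \<and> x \<in> B m}) / real N)" for N x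
  define F where "F = {x \<in> space M. ennreal \<rho> \<le> liminf (\<lambda>N. f N x)}"
  have f_eq: "f N x = ennreal ((\<Sum>m<N. indicator (B m) x) / real N)" for N x
    unfolding f_def by (simp add: card_eq_sum_indicator)
  have [measurable]: "f N \<in> borel_measurable M" for N
    unfolding f_eq using B by measurable
  have integral_f: "integral\<^sup>N M (f N) = ennreal ((\<Sum>m<N. prob (B m)) / real N)" for N
  proof -
    have int: "integrable M (\<lambda>x. indicator (B m) x :: real)" for m
      using B by (simp add: less_top[symmetric])
    have "integral\<^sup>N M (f N) = ennreal (integral\<^sup>L M (\<lambda>x. (\<Sum>m<N. indicator (B m) x) / real N))"
      unfolding f_eq using int
      by (intro nn_integral_eq_integral AE_I2) (auto intro!: sum_nonneg divide_nonneg_nonneg)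
    also have "\<dots> = ennreal ((\<Sum>m<N. prob (B m)) / real N)"
      using int B by (simp add: integral_sum)
    finally show ?thesis .
  qed
  have "eventually (\<lambda>N. integral\<^sup>N M (f N) \<le> ennreal ((\<eta> * real N + C) / real N)) sequentially"
    using eventually_gt_at_top[of 0]
    by eventually_elim (auto simp: integral_f intro!: ennreal_leI divide_right_mono bound)
  moreover have "(\<lambda>N. ennreal ((\<eta> * real N + C) / real N)) \<longlonglongrightarrow> ennreal \<eta>"
  proof (rule tendsto_ennrealI)
    have "(\<lambda>N. \<eta> + C / real N) \<longlonglongrightarrow> \<eta> + 0"
      by (intro tendsto_add tendsto_const lim_const_over_n)
    moreover have "eventually (\<lambda>N. \<eta> + C / real N = (\<eta> * real N + C) / real N) sequentially"
      using eventually_gt_at_top[of 0] by eventually_elim (simp add: field_simps)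
    ultimately show "(\<lambda>N. (\<eta> * real N + C) / real N) \<longlonglongrightarrow> \<eta>"
      by (simp add: Lim_transform_eventually)
  qed
  ultimately have "liminf (\<lambda>N. integral\<^sup>N M (f N)) \<le> ennreal \<eta>"
    using Liminf_mono[of "\<lambda>N. integral\<^sup>N M (f N)"] lim_imp_Liminf[OF sequentially_bot] by fastforce
  moreover have "ennreal \<rho> * emeasure M F \<le> (\<integral>\<^sup>+x. liminf (\<lambda>N. f N x) \<partial>M)"
    unfolding F_def
    by (subst nn_integral_cmult_indicator[symmetric]) (auto intro!: nn_integral_mono simp: indicator_def)
  moreover have "(\<integral>\<^sup>+x. liminf (\<lambda>N. f N x) \<partial>M) \<le> liminf (\<lambda>N. integral\<^sup>N M (f N))"
    by (rule nn_integral_liminf) simp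
  ultimately have "ennreal (\<rho> * prob F) \<le> ennreal \<eta>"
    using \<rho> by (simp add: emeasure_eq_measure ennreal_mult'')
  then show ?thesis unfolding F_def f_def using \<rho> \<eta> by (simp add: field_simps ennreal_le_iff)
qed

lemma sums_geometric_quarter: "(\<lambda>i. \<eta> / 2 ^ (i + 2)) sums (\<eta> / 2 :: real)"
proof -
  have "(\<lambda>i. \<eta> / 4 * (1 / 2) ^ i) sums (\<eta> / 4 * (1 / (1 - 1 / 2)))"
    by (intro sums_mult geometric_sums) auto
  moreover have "(\<lambda>i. \<eta> / 4 * (1 / 2 :: real) ^ i) = (\<lambda>i. \<eta> / 2 ^ (i + 2))"
    by (auto simp: power_one_over power_add field_simps)
  ultimately show ?thesis by simp
qed

lemma ext_integral_eq_integral: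
  assumes "integrable M f"
  shows "ext_integral M f = ereal (integral\<^sup>L M f)"
proof -
  obtain r q where rq: "0 \<le> r" "0 \<le> q" "(\<integral>\<^sup>+x. ennreal (f x) \<partial>M) = ennreal r"
    "(\<integral>\<^sup>+x. ennreal (- f x) \<partial>M) = ennreal q" "integral\<^sup>L M f = r - q"
    using integrableE[OF assms] by metis
  then show ?thesis unfolding ext_integral_def by simp
qed

lemma ext_integral_eq_minf:
  assumes "(\<integral>\<^sup>+x. ennreal (f x) \<partial>M) \<noteq> \<top>" "(\<integral>\<^sup>+x. ennreal (- f x) \<partial>M) = \<top>"
  shows "ext_integral M f = -\<infinity>"
proof -
  obtain r where "enn2ereal (\<integral>\<^sup>+x. ennreal (f x) \<partial>M) = ereal r"
    using assms(1) by (cases "enn2ereal (\<integral>\<^sup>+x. ennreal (f x) \<partial>M)") auto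
  then show ?thesis unfolding ext_integral_def assms(2) by simp
qed

section \<open>Birkhoff sums of a measure-preserving map\<close>

locale mpt = prob_space M for M :: "'a measure" +
  fixes T :: "'a \<Rightarrow> 'a"
  assumes measurable_T: "T \<in> measurable M M" and distr_T: "distr M M T = M"
begin

lemma measurable_Tn[measurable]: "(T ^^ n) \<in> measurable M M"
proof (induction n)
  case (Suc n)
  show ?case unfolding funpow.simps(2) by (rule measurable_comp[OF Suc measurable_T])
qed simp

lemma Tn_in_space: "x \<in> space M \<Longrightarrow> (T ^^ n) x \<in> space M"
  by (rule measurable_space[OF measurable_Tn])

lemma distr_Tn: "distr M M (T ^^ n) = M"
proof (induction n)
  case 0 then show ?case by (simp add: id_def distr_id2)
next
  case (Suc n)
  have "distr M M (T ^^ Suc n) = distr (distr M M (T ^^ n)) M T"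
    using distr_distr[OF measurable_T measurable_Tn] by simp
  also have "\<dots> = M" using Suc distr_T by simp
  finally show ?case .
qed

lemma Tn_add: "(T ^^ (m + n)) x = (T ^^ n) ((T ^^ m) x)"
  by (metis add.commute comp_apply funpow_add)

lemma integral_Tn:
  fixes f :: "'a \<Rightarrow> real"
  assumes "f \<in> borel_measurable M"
  shows "integral\<^sup>L M (\<lambda>x. f ((T ^^ n) x)) = integral\<^sup>L M f"
  using integral_distr[OF measurable_Tn assms, of n] distr_Tn[of n] by simp

lemma integrable_Tn:
  fixes f :: "'a \<Rightarrow> real"
  assumes "integrable M f"
  shows "integrable M (\<lambda>x. f ((T ^^ n) x))"
  using assms distr_Tn[of n] integrable_distr[OF measurable_Tn] by metis

lemma AE_Tn:
  assumes "AE x in M. P x"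
  shows "AE x in M. P ((T ^^ n) x)"
proof -
  have "AE x in distr M M (T ^^ n). P x" by (subst distr_Tn) (rule assms)
  then show ?thesis by (rule AE_distrD[OF measurable_Tn])
qed

lemma integrable_indicator_real: "A \<in> sets M \<Longrightarrow> integrable M (indicator A :: 'a \<Rightarrow> real)"
  by (simp add: less_top[symmetric])

lemma integral_indicator_Tn:
  "A \<in> sets M \<Longrightarrow> integral\<^sup>L M (\<lambda>x. indicator A ((T ^^ n) x) :: real) = measure M A"
  using integral_Tn[of "indicator A" n] by simp

definition birkhoff_sum :: "('a \<Rightarrow> real) \<Rightarrow> nat \<Rightarrow> 'a \<Rightarrow> real" where
  "birkhoff_sum f n x = (\<Sum>i<n. f ((T ^^ i) x))"

lemma borel_measurable_birkhoff_sum[measurable]: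
  assumes [measurable]: "f \<in> borel_measurable M"
  shows "birkhoff_sum f n \<in> borel_measurable M"
  unfolding birkhoff_sum_def by measurable

lemma integrable_birkhoff_sum:
  assumes "integrable M f"
  shows "integrable M (birkhoff_sum f n)"
  unfolding birkhoff_sum_def using integrable_Tn[OF assms] by auto

lemma integral_birkhoff_sum:
  assumes "integrable M f"
  shows "integral\<^sup>L M (birkhoff_sum f n) = n * integral\<^sup>L M f"
proof -
  have "integral\<^sup>L M (birkhoff_sum f n) = (\<Sum>i<n. integral\<^sup>L M (\<lambda>x. f ((T ^^ i) x)))"
    unfolding birkhoff_sum_def using integrable_Tn[OF assms] by (simp add: integral_sum)
  then show ?thesis using integral_Tn[OF borel_measurable_integrable[OF assms]] by simp
qed

lemma birkhoff_sum_0[simp]: "birkhoff_sum f 0 x = 0"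
  by (simp add: birkhoff_sum_def)

lemma birkhoff_sum_Suc: "birkhoff_sum f (Suc n) x = f x + birkhoff_sum f n (T x)"
  unfolding birkhoff_sum_def by (simp add: sum.lessThan_Suc_shift funpow_swap1 del: sum.lessThan_Suc)

lemma birkhoff_sum_Suc_right: "birkhoff_sum f (Suc n) x = birkhoff_sum f n x + f ((T ^^ n) x)"
  by (simp add: birkhoff_sum_def)

lemma birkhoff_sum_add:
  "birkhoff_sum f (m + n) x = birkhoff_sum f m x + birkhoff_sum f n ((T ^^ m) x)"
  by (induction n) (simp_all add: birkhoff_sum_Suc_right Tn_add del: funpow.simps)

lemma birkhoff_sum_diff_const: "birkhoff_sum (\<lambda>x. f x - c) n x = birkhoff_sum f n x - c * n"
  by (simp add: birkhoff_sum_def sum_subtractf)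

lemma birkhoff_sum_uminus: "birkhoff_sum (\<lambda>x. - f x) n x = - birkhoff_sum f n x"
  by (simp add: birkhoff_sum_def sum_negf)

lemma birkhoff_sum_mono: "(\<And>y. f y \<le> g y) \<Longrightarrow> birkhoff_sum f n x \<le> birkhoff_sum g n x"
  unfolding birkhoff_sum_def by (rule sum_mono) auto

lemma birkhoff_sum_nonneg: "(\<And>y. 0 \<le> f y) \<Longrightarrow> 0 \<le> birkhoff_sum f n x"
  unfolding birkhoff_sum_def by (intro sum_nonneg) auto

lemma subadditive_le_birkhoff_sum:
  assumes "a 0 x = 0" and "\<And>n. 0 < n \<Longrightarrow> a (Suc n) x \<le> a n x + a 1 ((T ^^ n) x)"
  shows "a n x \<le> birkhoff_sum (a 1) n x"
proof (induction n)
  case (Suc n)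
  show ?case
  proof (cases "n = 0")
    case False
    then show ?thesis using Suc assms(2)[of n] by (simp add: birkhoff_sum_Suc_right)
  qed (use assms(1) in \<open>simp add: birkhoff_sum_def\<close>)
qed (use assms(1) in simp)

lemma AE_subadditive_le_birkhoff_sum:
  assumes a0: "\<And>x. x \<in> space M \<Longrightarrow> a 0 x = 0"
    and sub: "\<And>n m. 0 < n \<Longrightarrow> 0 < m \<Longrightarrow> AE x in M. a (n + m) x \<le> a n x + a m ((T ^^ n) x)"
  shows "AE x in M. \<forall>n. a n x \<le> birkhoff_sum (a 1) n x"
proof -
  have "AE x in M. \<forall>n. 0 < n \<longrightarrow> a (Suc n) x \<le> a n x + a 1 ((T ^^ n) x)"
    unfolding AE_all_countable by (auto intro: AE_mp[OF sub[of _ 1] AE_I2])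
  then show ?thesis using AE_space
  proof eventually_elim
    case (elim x)
    show ?case by (intro allI subadditive_le_birkhoff_sum a0[OF elim(2)]) (use elim(1) in auto)
  qed
qed

text \<open>The positive parts are integrable by domination through the Birkhoff sums of \<open>a 1\<close>.\<close>
lemma integrable_subadditive:
  fixes a :: "nat \<Rightarrow> 'a \<Rightarrow> real"
  assumes [measurable]: "\<And>n. a n \<in> borel_measurable M"
    and a0: "\<And>x. x \<in> space M \<Longrightarrow> a 0 x = 0"
    and sub: "\<And>n m. 0 < n \<Longrightarrow> 0 < m \<Longrightarrow> AE x in M. a (n + m) x \<le> a n x + a m ((T ^^ n) x)"
    and a1: "integrable M (a 1)"
    and not_minf: "ext_integral M (a n) \<noteq> -\<infinity>"
  shows "integrable M (a n)"
proof -
  have "(\<integral>\<^sup>+x. ennreal (a n x) \<partial>M) \<le> (\<integral>\<^sup>+x. ennreal (birkhoff_sum (a 1) n x) \<partial>M)"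
    using AE_subadditive_le_birkhoff_sum[OF a0 sub]
    by (intro nn_integral_mono_AE) (auto elim!: eventually_mono intro: ennreal_leI)
  moreover have "(\<integral>\<^sup>+x. ennreal (birkhoff_sum (a 1) n x) \<partial>M) \<noteq> \<top>"
    using integrable_birkhoff_sum[OF a1, of n] unfolding real_integrable_def by auto
  ultimately have pos: "(\<integral>\<^sup>+x. ennreal (a n x) \<partial>M) \<noteq> \<top>" by (auto simp: top_unique)
  then have "(\<integral>\<^sup>+x. ennreal (- a n x) \<partial>M) \<noteq> \<top>"
    using ext_integral_eq_minf[OF pos] not_minf by auto
  then show ?thesis unfolding real_integrable_def using pos by auto
qed

definition max_birkhoff_sum :: "('a \<Rightarrow> real) \<Rightarrow> nat \<Rightarrow> 'a \<Rightarrow> real" where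
  "max_birkhoff_sum g N x = Max ((\<lambda>n. birkhoff_sum g n x) ` {..N})"

lemma birkhoff_sum_le_max: "n \<le> N \<Longrightarrow> birkhoff_sum g n x \<le> max_birkhoff_sum g N x"
  unfolding max_birkhoff_sum_def by (rule Max_ge) auto

lemma max_birkhoff_sum_nonneg: "0 \<le> max_birkhoff_sum g N x"
  using birkhoff_sum_le_max[of 0 N g x] by simp

lemma max_birkhoff_sum_attained: "\<exists>n\<le>N. max_birkhoff_sum g N x = birkhoff_sum g n x"
proof -
  have "max_birkhoff_sum g N x \<in> (\<lambda>n. birkhoff_sum g n x) ` {..N}"
    unfolding max_birkhoff_sum_def by (rule Max_in) auto
  then show ?thesis by auto
qed

lemma borel_measurable_max_birkhoff_sum[measurable]:
  assumes [measurable]: "g \<in> borel_measurable M"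
  shows "max_birkhoff_sum g N \<in> borel_measurable M"
  unfolding max_birkhoff_sum_def by measurable

lemma integrable_max_birkhoff_sum:
  assumes "integrable M g"
  shows "integrable M (max_birkhoff_sum g N)"
proof (rule Bochner_Integration.integrable_bound[where f = "\<lambda>x. \<Sum>n\<le>N. \<bar>birkhoff_sum g n x\<bar>"])
  show "integrable M (\<lambda>x. \<Sum>n\<le>N. \<bar>birkhoff_sum g n x\<bar>)"
    using integrable_birkhoff_sum[OF assms] by auto
  show "max_birkhoff_sum g N \<in> borel_measurable M" using assms by measurable
  show "AE x in M. norm (max_birkhoff_sum g N x) \<le> norm (\<Sum>n\<le>N. \<bar>birkhoff_sum g n x\<bar>)"
  proof (rule AE_I2)
    fix x
    obtain n where n: "n \<le> N" "max_birkhoff_sum g N x = birkhoff_sum g n x"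
      using max_birkhoff_sum_attained by blast
    have "\<bar>birkhoff_sum g n x\<bar> \<le> (\<Sum>n\<le>N. \<bar>birkhoff_sum g n x\<bar>)"
      using n(1) by (intro member_le_sum) auto
    then show "norm (max_birkhoff_sum g N x) \<le> norm (\<Sum>n\<le>N. \<bar>birkhoff_sum g n x\<bar>)"
      using n(2) max_birkhoff_sum_nonneg[of g N x] by simp
  qed
qed

text \<open>Garsia's proof: \<open>S\<^sub>N x - S\<^sub>N (T x) \<le> g x\<close> wherever \<open>S\<^sub>N x > 0\<close>, and
  \<open>S\<^sub>N\<close> and \<open>S\<^sub>N \<circ> T\<close> have the same integral.\<close>
lemma maximal_ergodic_inequality:
  assumes g: "integrable M g"
  shows "0 \<le> integral\<^sup>L M (\<lambda>x. indicator {x. 0 < max_birkhoff_sum g N x} x * g x)"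
proof -
  let ?S = "max_birkhoff_sum g N" and ?P = "{x. 0 < max_birkhoff_sum g N x}"
  have [measurable]: "g \<in> borel_measurable M" using g by auto
  have SI: "integrable M ?S" by (rule integrable_max_birkhoff_sum[OF g])
  have STI: "integrable M (\<lambda>x. ?S ((T ^^ 1) x))" by (rule integrable_Tn[OF SI])
  have PI: "integrable M (\<lambda>x. indicator ?P x * g x)"
  proof (rule Bochner_Integration.integrable_bound[where f = "\<lambda>x. \<bar>g x\<bar>"])
    show "(\<lambda>x. indicator ?P x * g x) \<in> borel_measurable M" by measurable
  qed (use g in \<open>auto intro!: AE_I2 simp: indicator_def\<close>)
  have pointwise: "?S x - ?S (T x) \<le> indicator ?P x * g x" for x
  proof (cases "0 < ?S x")
    case True
    obtain n where n: "n \<le> N" "?S x = birkhoff_sum g n x"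
      using max_birkhoff_sum_attained by blast
    then obtain m where m: "n = Suc m" using True by (cases n) auto
    have "?S x = g x + birkhoff_sum g m (T x)" using n m birkhoff_sum_Suc by simp
    also have "\<dots> \<le> g x + ?S (T x)" using birkhoff_sum_le_max[of m N g "T x"] n m by simp
    finally show ?thesis using True by simp
  next
    case False
    then show ?thesis using max_birkhoff_sum_nonneg[of g N x] max_birkhoff_sum_nonneg[of g N "T x"]
      by simp
  qed
  have "integral\<^sup>L M (\<lambda>x. ?S ((T ^^ 1) x)) = integral\<^sup>L M ?S"
    by (rule integral_Tn) measurable
  then have "0 = integral\<^sup>L M ?S - integral\<^sup>L M (\<lambda>x. ?S ((T ^^ 1) x))"
    by simp
  also have "\<dots> = integral\<^sup>L M (\<lambda>x. ?S x - ?S (T x))"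
    using SI STI by simp
  also have "\<dots> \<le> integral\<^sup>L M (\<lambda>x. indicator ?P x * g x)"
    using SI STI PI pointwise by (intro integral_mono) auto
  finally show ?thesis .
qed

definition unbounded_birkhoff_set :: "('a \<Rightarrow> real) \<Rightarrow> 'a set" where
  "unbounded_birkhoff_set g = {x \<in> space M. \<forall>C::nat. \<exists>n. real C < birkhoff_sum g n x}"

lemma sets_unbounded_birkhoff_set[measurable]:
  "g \<in> borel_measurable M \<Longrightarrow> unbounded_birkhoff_set g \<in> sets M"
  unfolding unbounded_birkhoff_set_def by measurable

lemma unbounded_birkhoff_set_invariant:
  "T -` unbounded_birkhoff_set g \<inter> space M = unbounded_birkhoff_set g"
proof (intro set_eqI iffI)
  fix x assume "x \<in> T -` unbounded_birkhoff_set g \<inter> space M"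
  then have x: "x \<in> space M" and Tx: "\<forall>C::nat. \<exists>n. real C < birkhoff_sum g n (T x)"
    unfolding unbounded_birkhoff_set_def by auto
  have "\<exists>n. real C < birkhoff_sum g n x" for C :: nat
  proof -
    obtain C' :: nat where C': "real C - g x \<le> real C'"
      using real_nat_ceiling_ge by blast
    obtain n where "real C' < birkhoff_sum g n (T x)" using Tx by blast
    then have "real C < birkhoff_sum g (Suc n) x" using C' birkhoff_sum_Suc[of g n x] by simp
    then show ?thesis by blast
  qed
  then show "x \<in> unbounded_birkhoff_set g" unfolding unbounded_birkhoff_set_def using x by auto
next
  fix x assume "x \<in> unbounded_birkhoff_set g"
  then have x: "x \<in> space M" and X: "\<forall>C::nat. \<exists>n. real C < birkhoff_sum g n x"
    unfolding unbounded_birkhoff_set_def by auto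
  have "\<exists>n. real C < birkhoff_sum g n (T x)" for C :: nat
  proof -
    obtain C' :: nat where C': "real C + \<bar>g x\<bar> \<le> real C'"
      using real_nat_ceiling_ge by blast
    obtain n where n: "real C' < birkhoff_sum g n x" using X by blast
    then obtain m where m: "n = Suc m" by (cases n) auto
    then have "real C < birkhoff_sum g m (T x)" using n C' birkhoff_sum_Suc[of g m x] by simp
    then show ?thesis by blast
  qed
  then show "x \<in> T -` unbounded_birkhoff_set g \<inter> space M"
    unfolding unbounded_birkhoff_set_def using x measurable_space[OF measurable_T x] by auto
qed

text \<open>If the Birkhoff sums were a.s. unbounded, the maximal ergodic inequality in the limit
  \<open>N \<rightarrow> \<infinity>\<close> would give \<open>\<integral>g \<ge> 0\<close>.\<close>
lemma prob_unbounded_birkhoff_set_neq_1: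
  assumes g: "integrable M g" and neg: "integral\<^sup>L M g < 0"
  shows "prob (unbounded_birkhoff_set g) \<noteq> 1"
proof
  assume P1: "prob (unbounded_birkhoff_set g) = 1"
  have [measurable]: "g \<in> borel_measurable M" using g by auto
  define s where "s N x = indicator {x. 0 < max_birkhoff_sum g N x} x * g x" for N x
  have "(\<lambda>N. integral\<^sup>L M (s N)) \<longlonglongrightarrow> integral\<^sup>L M g"
  proof (rule integral_dominated_convergence[where w = "\<lambda>x. \<bar>g x\<bar>"])
    show "AE x in M. norm (s N x) \<le> \<bar>g x\<bar>" for N
      unfolding s_def by (intro AE_I2) (auto simp: indicator_def)
    show "AE x in M. (\<lambda>N. s N x) \<longlonglongrightarrow> g x"
      using AE_prob_1[OF P1]
    proof eventually_elim
      case (elim x)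
      then obtain n where n: "real 0 < birkhoff_sum g n x"
        unfolding unbounded_birkhoff_set_def by blast
      have "eventually (\<lambda>N. s N x = g x) sequentially"
      proof (rule eventually_sequentiallyI[of n])
        fix N assume "n \<le> N"
        then show "s N x = g x" using n birkhoff_sum_le_max[of n N g x] unfolding s_def by simp
      qed
      then show ?case by (rule tendsto_eventually)
    qed
    show "s N \<in> borel_measurable M" for N unfolding s_def by measurable
  qed (use g in auto)
  moreover have "\<And>N. 0 \<le> integral\<^sup>L M (s N)"
    unfolding s_def by (rule maximal_ergodic_inequality[OF g])
  ultimately have "0 \<le> integral\<^sup>L M g" by (intro LIMSEQ_le_const) auto
  then show False using neg by simp
qed

end

locale ergodic_mpt = mpt +
  assumes ergodic: "\<And>B. B \<in> sets M \<Longrightarrow> T -` B \<inter> space M = B \<Longrightarrow> prob B = 0 \<or> prob B = 1"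
begin

lemma AE_birkhoff_sum_bounded:
  assumes g: "integrable M g" and neg: "integral\<^sup>L M g < 0"
  shows "AE x in M. \<exists>C. \<forall>n. birkhoff_sum g n x \<le> C"
proof -
  have gm: "g \<in> borel_measurable M" using g by auto
  have "prob (unbounded_birkhoff_set g) = 0"
    using ergodic[OF sets_unbounded_birkhoff_set[OF gm] unbounded_birkhoff_set_invariant]
      prob_unbounded_birkhoff_set_neq_1[OF g neg] by auto
  then have "AE x in M. x \<notin> unbounded_birkhoff_set g"
    using gm by (intro AE_not_in) (simp add: emeasure_eq_measure null_sets_def)
  then show ?thesis
  proof (rule AE_mp[OF _ AE_I2], intro impI)
    fix x assume "x \<in> space M" "x \<notin> unbounded_birkhoff_set g"
    then obtain C :: nat where "\<And>n. birkhoff_sum g n x \<le> real C"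
      unfolding unbounded_birkhoff_set_def by (auto simp: not_less)
    then show "\<exists>C. \<forall>n. birkhoff_sum g n x \<le> C" by blast
  qed
qed

lemma birkhoff_sum_eventually_le:
  assumes h: "integrable M h" and c: "integral\<^sup>L M h < c"
  shows "AE x in M. \<exists>N. \<forall>n\<ge>N. birkhoff_sum h n x \<le> c * n"
proof -
  define c' where "c' = (integral\<^sup>L M h + c) / 2"
  have c'1: "integral\<^sup>L M h < c'" and c'2: "c' < c" using c unfolding c'_def by auto
  have "integral\<^sup>L M (\<lambda>x. h x - c') < 0" using h c'1 by (simp add: prob_space)
  then have "AE x in M. \<exists>C. \<forall>n. birkhoff_sum (\<lambda>x. h x - c') n x \<le> C"
    using h by (intro AE_birkhoff_sum_bounded) auto
  then show ?thesis
  proof eventually_elim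
    case (elim x)
    then obtain C where "\<And>n. birkhoff_sum (\<lambda>x. h x - c') n x \<le> C" by blast
    then have C: "birkhoff_sum h n x \<le> c' * n + C" for n
      using birkhoff_sum_diff_const[of h c' n x] \<open>\<And>n. birkhoff_sum (\<lambda>x. h x - c') n x \<le> C\<close>[of n]
      by linarith
    obtain N :: nat where N: "C / (c - c') \<le> real N" using real_nat_ceiling_ge by blast
    have "birkhoff_sum h n x \<le> c * n" if "N \<le> n" for n
    proof -
      have "C \<le> (c - c') * real N" using N c'2 by (simp add: field_simps)
      also have "\<dots> \<le> (c - c') * n" using that c'2 by (intro mult_left_mono) auto
      finally show ?thesis using C[of n] by (simp add: algebra_simps)
    qed
    then show ?case by blast
  qed
qed

lemma birkhoff_sum_eventually_ge:
  assumes h: "integrable M h" and c: "c < integral\<^sup>L M h"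
  shows "AE x in M. \<exists>N. \<forall>n\<ge>N. c * n \<le> birkhoff_sum h n x"
proof -
  have "AE x in M. \<exists>N. \<forall>n\<ge>N. birkhoff_sum (\<lambda>x. - h x) n x \<le> (-c) * n"
    using h c by (intro birkhoff_sum_eventually_le) auto
  then show ?thesis by eventually_elim (simp add: birkhoff_sum_uminus)
qed

end

section \<open>Kingman's upper bound\<close>

text \<open>The cocycle of the theorem after subtracting \<open>n A\<close> from \<open>a n\<close>.\<close>
locale centered_subcocycle = ergodic_mpt +
  fixes a :: "nat \<Rightarrow> 'a \<Rightarrow> real"
  assumes borel_measurable_a[measurable]: "\<And>n. a n \<in> borel_measurable M"
    and a_0: "\<And>x. x \<in> space M \<Longrightarrow> a 0 x = 0"
    and subadditive: "\<And>n m. 0 < n \<Longrightarrow> 0 < m \<Longrightarrow> AE x in M. a (n + m) x \<le> a n x + a m ((T ^^ n) x)"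
    and integrable_a: "\<And>n. integrable M (a n)"
    and integral_a_nonneg: "\<And>n. 0 \<le> integral\<^sup>L M (a n)"
    and integral_a_small: "\<And>\<tau>::real. 0 < \<tau> \<Longrightarrow> \<exists>K\<ge>1. integral\<^sup>L M (a K) \<le> \<tau> * real K"
begin

definition subadditive_at :: "'a \<Rightarrow> bool" where
  "subadditive_at x \<longleftrightarrow> x \<in> space M \<and> (\<forall>n m j. 0 < n \<longrightarrow> 0 < m \<longrightarrow>
     a (n + m) ((T ^^ j) x) \<le> a n ((T ^^ j) x) + a m ((T ^^ n) ((T ^^ j) x)))"

lemma AE_subadditive_at: "AE x in M. subadditive_at x"
proof -
  have "AE x in M. \<forall>n m j. 0 < n \<longrightarrow> 0 < m \<longrightarrow>
     a (n + m) ((T ^^ j) x) \<le> a n ((T ^^ j) x) + a m ((T ^^ n) ((T ^^ j) x))"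
    unfolding AE_all_countable
  proof (intro allI)
    fix n m j :: nat
    show "AE x in M. 0 < n \<longrightarrow> 0 < m \<longrightarrow>
        a (n + m) ((T ^^ j) x) \<le> a n ((T ^^ j) x) + a m ((T ^^ n) ((T ^^ j) x))"
      by (cases "0 < n \<and> 0 < m") (auto intro: AE_Tn[OF subadditive])
  qed
  then show ?thesis unfolding subadditive_at_def using AE_space by eventually_elim auto
qed

lemma subadditive_at_space: "subadditive_at x \<Longrightarrow> x \<in> space M"
  unfolding subadditive_at_def by simp

lemma subadditive_at_Tn: "subadditive_at x \<Longrightarrow> subadditive_at ((T ^^ k) x)"
  unfolding subadditive_at_def using Tn_in_space by (auto simp: Tn_add[symmetric])

lemma subadditive_atD:
  assumes "subadditive_at y"
  shows "a (p + q) y \<le> a p y + a q ((T ^^ p) y)"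
proof (cases "p = 0 \<or> q = 0")
  case True
  then show ?thesis using a_0 Tn_in_space subadditive_at_space[OF assms] by auto
next
  case False
  then show ?thesis using assms unfolding subadditive_at_def by (metis funpow_0 neq0_conv)
qed

definition abs_a1 :: "'a \<Rightarrow> real" where
  "abs_a1 x = \<bar>a 1 x\<bar>"

lemma integrable_abs_a1: "integrable M abs_a1"
  unfolding abs_a1_def using integrable_a[of 1] by auto

lemma borel_measurable_abs_a1[measurable]: "abs_a1 \<in> borel_measurable M"
  unfolding abs_a1_def by measurable

lemma abs_a1_nonneg: "0 \<le> abs_a1 x"
  unfolding abs_a1_def by simp

lemma a_le_birkhoff_sum_abs_a1:
  assumes "subadditive_at y"
  shows "a r y \<le> birkhoff_sum abs_a1 r y"
proof -
  have "a r y \<le> birkhoff_sum (a 1) r y"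
    using assms by (intro subadditive_le_birkhoff_sum)
      (auto simp: a_0 subadditive_at_space subadditive_atD[of y _ 1, simplified])
  also have "\<dots> \<le> birkhoff_sum abs_a1 r y"
    by (rule birkhoff_sum_mono) (simp add: abs_a1_def)
  finally show ?thesis .
qed

lemma a_mult_le_sum:
  assumes "subadditive_at y"
  shows "a (Q * K) y \<le> (\<Sum>q<Q. a K ((T ^^ (q * K)) y))"
proof (induction Q)
  case 0 then show ?case using a_0 subadditive_at_space[OF assms] by simp
next
  case (Suc Q)
  have "a (Q * K + K) y \<le> a (Q * K) y + a K ((T ^^ (Q * K)) y)"
    by (rule subadditive_atD[OF assms])
  then show ?case using Suc by (simp add: add.commute)
qed

definition edge_indices :: "nat \<Rightarrow> nat \<Rightarrow> nat set" where
  "edge_indices K n = {i. i < n \<and> (i < K \<or> n < i + K)}"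

lemma finite_edge_indices[simp]: "finite (edge_indices K n)"
  unfolding edge_indices_def by auto

lemma edge_indices_subset: "edge_indices K n \<subseteq> {..<K} \<union> {n - K..<n}"
  unfolding edge_indices_def by auto

lemma card_edge_indices: "card (edge_indices K n) \<le> 2 * K"
proof -
  have "card (edge_indices K n) \<le> card ({..<K} \<union> {n - K..<n})"
    by (intro card_mono edge_indices_subset) auto
  also have "\<dots> \<le> card {..<K} + card {n - K..<n}" by (rule card_Un_le)
  finally show ?thesis by simp
qed

text \<open>Cut \<open>[0, n)\<close> into \<open>[0, p)\<close>, blocks of length \<open>K\<close> starting at \<open>p\<close>, and a remainder;
  the two ends are estimated by single steps.\<close>
lemma a_le_phase_blocks:
  assumes y: "subadditive_at y" and pK: "p < K"
  shows "a n y \<le> (\<Sum>q<(n - p) div K. a K ((T ^^ (p + q * K)) y))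
                 + (\<Sum>i\<in>edge_indices K n. abs_a1 ((T ^^ i) y))"
proof (cases "p \<le> n")
  case False
  then have "a n y \<le> birkhoff_sum abs_a1 n y" using a_le_birkhoff_sum_abs_a1[OF y] by simp
  also have "\<dots> \<le> (\<Sum>i\<in>edge_indices K n. abs_a1 ((T ^^ i) y))"
    unfolding birkhoff_sum_def using False pK abs_a1_nonneg
    by (intro sum_mono2) (auto simp: edge_indices_def)
  finally show ?thesis using False by simp
next
  case True
  define Q where "Q = (n - p) div K"
  define r where "r = (n - p) mod K"
  have n: "n = p + Q * K + r" unfolding Q_def r_def using True by simp
  have rK: "r < K" unfolding r_def using pK by simp
  have y': "subadditive_at ((T ^^ p) y)" "subadditive_at ((T ^^ (p + Q * K)) y)"
    using subadditive_at_Tn[OF y] by auto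
  have "a n y \<le> a p y + a (Q * K + r) ((T ^^ p) y)"
    using subadditive_atD[OF y, of p "Q * K + r"] n by (simp add: add.assoc)
  also have "a (Q * K + r) ((T ^^ p) y) \<le> a (Q * K) ((T ^^ p) y) + a r ((T ^^ (p + Q * K)) y)"
    using subadditive_atD[OF y'(1)] by (simp add: Tn_add)
  also have "a (Q * K) ((T ^^ p) y) \<le> (\<Sum>q<Q. a K ((T ^^ (p + q * K)) y))"
    using a_mult_le_sum[OF y'(1)] by (simp add: Tn_add)
  also have "a r ((T ^^ (p + Q * K)) y) \<le> birkhoff_sum abs_a1 r ((T ^^ (p + Q * K)) y)"
    by (rule a_le_birkhoff_sum_abs_a1[OF y'(2)])
  also have "a p y \<le> birkhoff_sum abs_a1 p y" by (rule a_le_birkhoff_sum_abs_a1[OF y])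
  finally have "a n y \<le> (\<Sum>q<Q. a K ((T ^^ (p + q * K)) y))
      + (birkhoff_sum abs_a1 p y + birkhoff_sum abs_a1 r ((T ^^ (p + Q * K)) y))"
    by simp
  also have "birkhoff_sum abs_a1 p y + birkhoff_sum abs_a1 r ((T ^^ (p + Q * K)) y) =
             (\<Sum>i\<in>{..<p} \<union> {p + Q * K..<n}. abs_a1 ((T ^^ i) y))"
  proof -
    have "birkhoff_sum abs_a1 r ((T ^^ (p + Q * K)) y) = (\<Sum>i\<in>{p + Q * K..<n}. abs_a1 ((T ^^ i) y))"
      unfolding birkhoff_sum_def n
      by (rule sum.reindex_bij_witness[where j = "\<lambda>i. i + (p + Q * K)" and i = "\<lambda>i. i - (p + Q * K)"])
         (auto simp: Tn_add[symmetric] add.commute)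
    then show ?thesis unfolding birkhoff_sum_def by (subst sum.union_disjoint) auto
  qed
  also have "\<dots> \<le> (\<Sum>i\<in>edge_indices K n. abs_a1 ((T ^^ i) y))"
    using pK n rK abs_a1_nonneg by (intro sum_mono2) (auto simp: edge_indices_def)
  finally show ?thesis unfolding Q_def by simp
qed

text \<open>Averaging the previous bound over the \<open>K\<close> phases \<open>p < K\<close> uses every block start once.\<close>
lemma a_le_block_average:
  assumes y: "subadditive_at y" and K: "0 < K"
  shows "K * a n y \<le> (\<Sum>b\<in>{b. b + K \<le> n}. a K ((T ^^ b) y))
                     + K * (\<Sum>i\<in>edge_indices K n. abs_a1 ((T ^^ i) y))"
proof -
  have "K * a n y = (\<Sum>p<K. a n y)" by simp
  also have "\<dots> \<le> (\<Sum>p<K. (\<Sum>q<(n - p) div K. a K ((T ^^ (p + q * K)) y))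
                         + (\<Sum>i\<in>edge_indices K n. abs_a1 ((T ^^ i) y)))"
    by (intro sum_mono a_le_phase_blocks[OF y]) auto
  also have "\<dots> = (\<Sum>b\<in>{b. b + K \<le> n}. a K ((T ^^ b) y))
                  + K * (\<Sum>i\<in>edge_indices K n. abs_a1 ((T ^^ i) y))"
    using sum_residue_classes[OF K, where G = "\<lambda>b. a K ((T ^^ b) y)" and n = n] by (simp add: sum.distrib)
  finally show ?thesis .
qed

lemma sum_edge_indices_le:
  assumes "K \<le> n"
  shows "(\<Sum>i\<in>edge_indices K n. abs_a1 ((T ^^ i) x))
         \<le> birkhoff_sum abs_a1 K x + (birkhoff_sum abs_a1 n x - birkhoff_sum abs_a1 (n - K) x)"
proof -
  let ?f = "\<lambda>i. abs_a1 ((T ^^ i) x)"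
  have "(\<Sum>i\<in>edge_indices K n. ?f i) \<le> (\<Sum>i\<in>{..<K} \<union> {n - K..<n}. ?f i)"
    using abs_a1_nonneg by (intro sum_mono2 edge_indices_subset) auto
  also have "\<dots> \<le> (\<Sum>i<K. ?f i) + (\<Sum>i\<in>{n - K..<n}. ?f i)"
    using abs_a1_nonneg by (subst sum_Un) (auto intro: sum_nonneg)
  also have "(\<Sum>i\<in>{n - K..<n}. ?f i) = birkhoff_sum abs_a1 n x - birkhoff_sum abs_a1 (n - K) x"
  proof -
    have "{..<n} = {..<n - K} \<union> {n - K..<n}" using assms by auto
    then have "birkhoff_sum abs_a1 n x = (\<Sum>i\<in>{..<n - K} \<union> {n - K..<n}. ?f i)"
      unfolding birkhoff_sum_def by simp
    also have "\<dots> = birkhoff_sum abs_a1 (n - K) x + (\<Sum>i\<in>{n - K..<n}. ?f i)"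
      unfolding birkhoff_sum_def by (rule sum.union_disjoint) auto
    finally have "birkhoff_sum abs_a1 n x = birkhoff_sum abs_a1 (n - K) x + (\<Sum>i\<in>{n - K..<n}. ?f i)" .
    then show ?thesis by simp
  qed
  finally show ?thesis by (simp add: birkhoff_sum_def)
qed

lemma a_le_birkhoff_blocks:
  assumes x: "subadditive_at x" and K: "0 < K" "K \<le> n"
  shows "K * a n x \<le> birkhoff_sum (a K) (n + 1 - K) x
           + K * (birkhoff_sum abs_a1 K x + (birkhoff_sum abs_a1 n x - birkhoff_sum abs_a1 (n - K) x))"
proof -
  have "{b. b + K \<le> n} = {..<n + 1 - K}" using K by auto
  then have "(\<Sum>b\<in>{b. b + K \<le> n}. a K ((T ^^ b) x)) = birkhoff_sum (a K) (n + 1 - K) x"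
    by (simp add: birkhoff_sum_def)
  then show ?thesis
    using a_le_block_average[OF x K(1), of n] mult_left_mono[OF sum_edge_indices_le[OF K(2)], of K x]
    by simp
qed

lemma eventually_a_le_of_birkhoff_bounds:
  assumes x: "subadditive_at x" and K: "1 \<le> K" and e: "0 < \<epsilon>"
    and aK: "\<And>m. m \<ge> N \<Longrightarrow> birkhoff_sum (a K) m x \<le> (\<epsilon> / 2 * real K) * real m"
    and upper: "\<And>m. m \<ge> N \<Longrightarrow> birkhoff_sum abs_a1 m x \<le> (E + \<epsilon> / 8) * real m"
    and lower: "\<And>m. m \<ge> N \<Longrightarrow> (E - \<epsilon> / 8) * real m \<le> birkhoff_sum abs_a1 m x"
  shows "\<exists>N'. \<forall>n\<ge>N'. a n x \<le> \<epsilon> * real n"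
proof -
  have Kr: "real K \<ge> 1" using K by simp
  define C where "C = birkhoff_sum abs_a1 K x + real K * E"
  obtain N4 :: nat where N4: "4 * C / \<epsilon> \<le> real N4" using real_nat_ceiling_ge by blast
  have "a n x \<le> \<epsilon> * real n" if n: "n \<ge> N + N4 + K" for n
  proof -
    have Kn: "K \<le> n" using n by simp
    have "birkhoff_sum (a K) (n + 1 - K) x \<le> (\<epsilon> / 2 * real K) * real (n + 1 - K)"
      using aK[of "n + 1 - K"] n by linarith
    also have "\<dots> \<le> real K * (\<epsilon> / 2 * real n)"
      using e K Kn by (simp add: mult_left_mono)
    finally have blocks: "birkhoff_sum (a K) (n + 1 - K) x \<le> real K * (\<epsilon> / 2 * real n)" .
    have "birkhoff_sum abs_a1 n x - birkhoff_sum abs_a1 (n - K) x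
            \<le> (E + \<epsilon> / 8) * real n - (E - \<epsilon> / 8) * (real n - real K)"
      using upper[of n] lower[of "n - K"] n Kn by (simp add: of_nat_diff le_diff_conv2)
    also have "\<dots> \<le> \<epsilon> / 4 * real n + real K * E"
      using mult_nonneg_nonneg[of \<epsilon> "real K"] e by (simp add: field_simps)
    finally have "birkhoff_sum abs_a1 K x + (birkhoff_sum abs_a1 n x - birkhoff_sum abs_a1 (n - K) x)
                    \<le> \<epsilon> / 4 * real n + C"
      unfolding C_def by linarith
    note edges = mult_left_mono[OF this, of "real K"]
    have "real K * a n x \<le> real K * (\<epsilon> / 2 * real n) + real K * (\<epsilon> / 4 * real n + C)"
      using a_le_birkhoff_blocks[OF x, of K n] blocks edges Kn K by linarith
    then have "real K * a n x \<le> real K * (\<epsilon> / 2 * real n + (\<epsilon> / 4 * real n + C))"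
      by (simp only: distrib_left)
    then have "a n x \<le> \<epsilon> / 2 * real n + (\<epsilon> / 4 * real n + C)"
      using Kr mult_le_cancel_left_pos[of "real K"] by simp
    moreover have "C \<le> \<epsilon> / 4 * real n"
    proof -
      have "4 * C / \<epsilon> \<le> real n" using N4 n by linarith
      then show ?thesis using e by (simp add: field_simps)
    qed
    ultimately show ?thesis by linarith
  qed
  then show ?thesis by blast
qed

text \<open>For a block
  length \<open>K\<close> with \<open>\<integral>a\<^sub>K \<le> \<epsilon>K/4\<close>, the Birkhoff averages of \<open>a\<^sub>K\<close> are eventually
  \<open>\<le> \<epsilon>K/2\<close>, while those of \<open>\<bar>a\<^sub>1\<bar>\<close> converge, so the edge terms are \<open>o(n)\<close>.\<close>
lemma eventually_a_le:
  assumes e: "0 < \<epsilon>"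
  shows "AE x in M. \<exists>N. \<forall>n\<ge>N. a n x \<le> \<epsilon> * real n"
proof -
  obtain K where K: "K \<ge> 1" "integral\<^sup>L M (a K) \<le> (\<epsilon> / 4) * real K"
    using integral_a_small[of "\<epsilon> / 4"] e by auto
  define E where "E = integral\<^sup>L M abs_a1"
  have "0 < \<epsilon> * real K" using e K by simp
  then have "AE x in M. \<exists>N. \<forall>m\<ge>N. birkhoff_sum (a K) m x \<le> (\<epsilon> / 2 * real K) * real m"
    using K by (intro birkhoff_sum_eventually_le[OF integrable_a]) auto
  moreover have "AE x in M. \<exists>N. \<forall>m\<ge>N. birkhoff_sum abs_a1 m x \<le> (E + \<epsilon> / 8) * real m"
    using e by (intro birkhoff_sum_eventually_le[OF integrable_abs_a1]) (auto simp: E_def)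
  moreover have "AE x in M. \<exists>N. \<forall>m\<ge>N. (E - \<epsilon> / 8) * real m \<le> birkhoff_sum abs_a1 m x"
    using e by (intro birkhoff_sum_eventually_ge[OF integrable_abs_a1]) (auto simp: E_def)
  ultimately show ?thesis using AE_subadditive_at
  proof eventually_elim
    case (elim x)
    obtain N1 N2 N3 where
      "\<forall>m\<ge>N1. birkhoff_sum (a K) m x \<le> (\<epsilon> / 2 * real K) * real m"
      "\<forall>m\<ge>N2. birkhoff_sum abs_a1 m x \<le> (E + \<epsilon> / 8) * real m"
      "\<forall>m\<ge>N3. (E - \<epsilon> / 8) * real m \<le> birkhoff_sum abs_a1 m x"
      using elim(1-3) by blast
    then show ?case
      by (intro eventually_a_le_of_birkhoff_bounds[OF elim(4) K(1) e, where N = "N1 + N2 + N3" and E = E])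
        auto
  qed
qed

definition exceed_set :: "real \<Rightarrow> nat \<Rightarrow> 'a set" where
  "exceed_set \<epsilon> L = {x \<in> space M. \<exists>n\<ge>L. \<epsilon> * n < a n x}"

lemma sets_exceed_set[measurable]: "exceed_set \<epsilon> L \<in> sets M"
  unfolding exceed_set_def by measurable

lemma exceed_set_antimono:
  assumes "\<epsilon> \<le> \<epsilon>'" "L \<le> L'"
  shows "exceed_set \<epsilon>' L' \<subseteq> exceed_set \<epsilon> L"
proof
  fix x assume "x \<in> exceed_set \<epsilon>' L'"
  then obtain n where n: "x \<in> space M" "L' \<le> n" "\<epsilon>' * n < a n x" unfolding exceed_set_def by auto
  moreover have "\<epsilon> * n \<le> \<epsilon>' * n" using assms by (intro mult_right_mono) auto
  ultimately show "x \<in> exceed_set \<epsilon> L"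
    using assms unfolding exceed_set_def by (auto intro!: exI[of _ n])
qed

lemma eventually_measure_exceed_set_less:
  assumes e: "0 < \<epsilon>" and h: "0 < \<eta>"
  shows "eventually (\<lambda>L. measure M (exceed_set \<epsilon> L) < \<eta>) sequentially"
proof -
  have "AE x in M. x \<notin> (\<Inter>L. exceed_set \<epsilon> L)"
    using eventually_a_le[OF e]
  proof eventually_elim
    case (elim x)
    then obtain N where "\<forall>n\<ge>N. a n x \<le> \<epsilon> * n" by auto
    then have "x \<notin> exceed_set \<epsilon> N" unfolding exceed_set_def by force
    then show ?case by blast
  qed
  then have "measure M (\<Inter>L. exceed_set \<epsilon> L) = 0"
    by (subst (asm) AE_iff_measurable[of "\<Inter>L. exceed_set \<epsilon> L"])
       (auto simp: exceed_set_def measure_def)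
  moreover have "(\<lambda>L. measure M (exceed_set \<epsilon> L)) \<longlonglongrightarrow> measure M (\<Inter>L. exceed_set \<epsilon> L)"
    by (intro Lim_measure_decseq) (auto simp: decseq_def exceed_set_antimono)
  ultimately show ?thesis using h by (simp add: order_tendsto_iff)
qed

text \<open>Only the finitely many \<open>n < L\<close> left uncontrolled by \<open>exceed_set 1 L\<close> need a large scale \<open>D\<close>.\<close>
lemma exists_measure_exceed_set_less:
  assumes h: "0 < \<eta>"
  shows "\<exists>D\<ge>1. measure M (exceed_set D 1) < \<eta>"
proof -
  obtain L where L: "measure M (exceed_set 1 L) < \<eta> / 2"
    using eventually_measure_exceed_set_less[of 1 "\<eta> / 2"] h eventually_sequentially by fastforce
  define R where "R d = {x \<in> space M. \<exists>n<L. real d * real n < a n x \<and> 1 \<le> n}" for d :: nat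
  have R_sets[measurable]: "R d \<in> sets M" for d unfolding R_def by measurable
  have "decseq R"
  proof (intro monotoneI subsetI)
    fix d d' x assume "d \<le> d'" "x \<in> R d'"
    then obtain n where "n < L" "real d' * real n < a n x" "1 \<le> n" "x \<in> space M"
      unfolding R_def by auto
    moreover have "real d * real n \<le> real d' * real n" using \<open>d \<le> d'\<close> by (intro mult_right_mono) auto
    ultimately have "n < L \<and> real d * real n < a n x \<and> 1 \<le> n" by linarith
    then show "x \<in> R d" unfolding R_def using \<open>x \<in> space M\<close> by blast
  qed
  moreover have "(\<Inter>d. R d) = {}"
  proof (rule ccontr)
    assume "(\<Inter>d. R d) \<noteq> {}"
    then obtain x where x: "\<And>d. x \<in> R d" by auto
    obtain d :: nat where d: "(\<Sum>n<L. \<bar>a n x\<bar>) \<le> real d" using real_nat_ceiling_ge by blast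
    obtain n where n: "n < L" "real d * real n < a n x" "1 \<le> n" using x[of d] unfolding R_def by auto
    have "\<bar>a n x\<bar> \<le> (\<Sum>n<L. \<bar>a n x\<bar>)" using n(1) by (intro member_le_sum) auto
    moreover have "real d * 1 \<le> real d * real n" using n(3) by (intro mult_left_mono) auto
    ultimately show False using n(2) d by linarith
  qed
  ultimately have "(\<lambda>d. measure M (R d)) \<longlonglongrightarrow> 0"
    using Lim_measure_decseq[of R M] R_sets by (auto simp: image_subset_iff)
  then obtain d0 where d0: "\<And>d. d \<ge> d0 \<Longrightarrow> measure M (R d) < \<eta> / 2"
    using h unfolding order_tendsto_iff eventually_sequentially by (meson half_gt_zero)
  define d where "d = Suc d0"
  have "exceed_set (real d) 1 \<subseteq> exceed_set 1 L \<union> R d"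
  proof
    fix x assume "x \<in> exceed_set (real d) 1"
    then obtain n where n: "x \<in> space M" "1 \<le> n" "real d * real n < a n x"
      unfolding exceed_set_def by auto
    have "1 * real n \<le> real d * real n" unfolding d_def by (intro mult_right_mono) auto
    then have "1 * real n < a n x" using n(3) by linarith
    then show "x \<in> exceed_set 1 L \<union> R d"
      using n unfolding exceed_set_def R_def by (cases "n < L") (auto intro!: exI[of _ n])
  qed
  then have "measure M (exceed_set (real d) 1) \<le> measure M (exceed_set 1 L) + measure M (R d)"
    by (intro order.trans[OF finite_measure_mono measure_Un_le]) auto
  also have "\<dots> < \<eta>" using L d0[of d] unfolding d_def by simp
  finally show ?thesis unfolding d_def by (intro exI[of _ "real (Suc d0)"]) auto
qed

section \<open>Control functions and drops\<close>

lemma exists_integral_tail_less: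
  assumes "0 < \<theta>"
  shows "\<exists>c\<ge>0. integral\<^sup>L M (\<lambda>x. max 0 (abs_a1 x - c)) < \<theta>"
proof -
  define s where "s N x = max 0 (abs_a1 x - real N)" for N :: nat and x
  have "(\<lambda>N. integral\<^sup>L M (s N)) \<longlonglongrightarrow> integral\<^sup>L M (\<lambda>x. 0)"
  proof (rule integral_dominated_convergence[where w = abs_a1])
    show "s N \<in> borel_measurable M" for N unfolding s_def by measurable
    show "AE x in M. norm (s N x) \<le> abs_a1 x" for N
      unfolding s_def using abs_a1_nonneg by (intro AE_I2) auto
    show "AE x in M. (\<lambda>N. s N x) \<longlonglongrightarrow> 0"
    proof (rule AE_I2)
      fix x
      obtain N0 :: nat where "abs_a1 x \<le> real N0" using real_nat_ceiling_ge by blast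
      then have "eventually (\<lambda>N. s N x = 0) sequentially"
        unfolding s_def eventually_sequentially by (intro exI[of _ N0]) auto
      then show "(\<lambda>N. s N x) \<longlonglongrightarrow> 0" by (rule tendsto_eventually)
    qed
  qed (auto simp: integrable_abs_a1)
  then have "eventually (\<lambda>N. integral\<^sup>L M (s N) < \<theta>) sequentially"
    using assms by (simp add: order_tendsto_iff)
  then obtain N where "integral\<^sup>L M (s N) < \<theta>" unfolding eventually_sequentially by auto
  then show ?thesis unfolding s_def by (intro exI[of _ "real N"]) auto
qed

definition excess :: "nat \<Rightarrow> real \<Rightarrow> 'a \<Rightarrow> real" where
  "excess K \<epsilon> x = max 0 (a K x - \<epsilon> * real K)"

definition tail :: "real \<Rightarrow> 'a \<Rightarrow> real" where
  "tail c x = max 0 (abs_a1 x - c)"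

text \<open>By \<open>a_le_birkhoff_sum_control\<close>, \<open>a\<close> grows by at most \<open>\<epsilon>\<close> per step plus the Birkhoff
  sum of this function, up to a constant; for suitable \<open>K\<close> and \<open>c\<close> its integral is small.\<close>
definition control :: "nat \<Rightarrow> real \<Rightarrow> real \<Rightarrow> 'a \<Rightarrow> real" where
  "control K c \<epsilon> x = excess K \<epsilon> x / real K + tail c x"

lemma borel_measurable_excess[measurable]: "excess K \<epsilon> \<in> borel_measurable M"
  unfolding excess_def by measurable

lemma borel_measurable_tail[measurable]: "tail c \<in> borel_measurable M"
  unfolding tail_def by measurable

lemma integrable_excess: "integrable M (excess K \<epsilon>)"
  unfolding excess_def using integrable_a[of K] by auto

lemma integrable_tail: "integrable M (tail c)"
  unfolding tail_def using integrable_abs_a1 by auto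

lemma integrable_control: "integrable M (control K c \<epsilon>)"
  unfolding control_def using integrable_excess integrable_tail by auto

lemma excess_nonneg: "0 \<le> excess K \<epsilon> x"
  unfolding excess_def by simp

lemma tail_nonneg: "0 \<le> tail c x"
  unfolding tail_def by simp

lemma control_nonneg: "0 \<le> control K c \<epsilon> x"
  unfolding control_def using excess_nonneg tail_nonneg by simp

lemma excess_le:
  assumes y: "subadditive_at y" and e: "0 \<le> \<epsilon>" and c: "0 \<le> c"
  shows "excess K \<epsilon> y \<le> indicator (exceed_set \<epsilon> K) y * (real K * c) + birkhoff_sum (tail c) K y"
proof (cases "\<epsilon> * real K < a K y")
  case False
  then show ?thesis
    using c tail_nonneg birkhoff_sum_nonneg[of "tail c" K y] by (simp add: excess_def)
next
  case True
  then have "y \<in> exceed_set \<epsilon> K"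
    using subadditive_at_space[OF y] unfolding exceed_set_def by auto
  have "excess K \<epsilon> y \<le> a K y" unfolding excess_def using True e by simp
  also have "\<dots> \<le> birkhoff_sum abs_a1 K y" by (rule a_le_birkhoff_sum_abs_a1[OF y])
  also have "\<dots> \<le> birkhoff_sum (\<lambda>x. c + tail c x) K y"
    unfolding tail_def by (intro birkhoff_sum_mono) auto
  also have "\<dots> = real K * c + birkhoff_sum (tail c) K y"
    by (simp add: birkhoff_sum_def sum.distrib)
  finally show ?thesis using \<open>y \<in> exceed_set \<epsilon> K\<close> by simp
qed

lemma integral_excess_le:
  assumes e: "0 \<le> \<epsilon>" and c: "0 \<le> c"
  shows "integral\<^sup>L M (excess K \<epsilon>)
           \<le> real K * c * measure M (exceed_set \<epsilon> K) + real K * integral\<^sup>L M (tail c)"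
proof -
  have I: "integrable M (\<lambda>y. indicator (exceed_set \<epsilon> K) y * (real K * c))"
    using integrable_indicator_real[OF sets_exceed_set] by auto
  have "integral\<^sup>L M (excess K \<epsilon>)
          \<le> integral\<^sup>L M (\<lambda>y. indicator (exceed_set \<epsilon> K) y * (real K * c) + birkhoff_sum (tail c) K y)"
  proof (rule integral_mono_AE)
    show "AE y in M. excess K \<epsilon> y
            \<le> indicator (exceed_set \<epsilon> K) y * (real K * c) + birkhoff_sum (tail c) K y"
      using AE_subadditive_at by eventually_elim (rule excess_le[OF _ e c])
  qed (use integrable_excess I integrable_birkhoff_sum[OF integrable_tail] in auto)
  also have "\<dots> = real K * c * measure M (exceed_set \<epsilon> K) + real K * integral\<^sup>L M (tail c)"
    using I integrable_birkhoff_sum[OF integrable_tail] integral_birkhoff_sum[OF integrable_tail]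
    by (simp add: mult.commute)
  finally show ?thesis .
qed

lemma exists_integral_control_less:
  assumes e: "0 < \<epsilon>" and t: "0 < \<theta>"
  shows "\<exists>K c. 1 \<le> K \<and> 0 \<le> c \<and> integral\<^sup>L M (control K c \<epsilon>) < \<theta>"
proof -
  obtain c where c: "0 \<le> c" "integral\<^sup>L M (tail c) < \<theta> / 4"
    using exists_integral_tail_less[of "\<theta> / 4"] t unfolding tail_def by auto
  define \<eta> where "\<eta> = \<theta> / (4 * (c + 1))"
  have "0 < \<eta>" unfolding \<eta>_def using t c by simp
  then obtain L where L: "\<And>K. K \<ge> L \<Longrightarrow> measure M (exceed_set \<epsilon> K) < \<eta>"
    using eventually_measure_exceed_set_less[OF e] unfolding eventually_sequentially by blast
  define K where "K = Suc L"
  have K: "1 \<le> K" "measure M (exceed_set \<epsilon> K) < \<eta>" using L unfolding K_def by auto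
  have "integral\<^sup>L M (excess K \<epsilon>) / real K \<le> c * measure M (exceed_set \<epsilon> K) + integral\<^sup>L M (tail c)"
    using integral_excess_le[of \<epsilon> c K] e c K by (simp add: field_simps)
  moreover have "c * measure M (exceed_set \<epsilon> K) \<le> c * \<eta>"
    using K c by (intro mult_left_mono) auto
  moreover have "c * \<eta> < \<theta> / 4"
  proof -
    have "c * \<eta> = \<theta> / 4 * (c / (c + 1))" unfolding \<eta>_def using c by (simp add: field_simps)
    also have "\<dots> < \<theta> / 4 * 1" using t c by (intro mult_strict_left_mono) auto
    finally show ?thesis by simp
  qed
  moreover have "integral\<^sup>L M (control K c \<epsilon>) = integral\<^sup>L M (excess K \<epsilon>) / real K + integral\<^sup>L M (tail c)"
    unfolding control_def using integrable_excess integrable_tail by simp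
  ultimately have "integral\<^sup>L M (control K c \<epsilon>) < \<theta>" using c(2) t by linarith
  then show ?thesis using c(1) K(1) by blast
qed

lemma a_le_birkhoff_sum_control:
  assumes y: "subadditive_at y" and K: "1 \<le> K" and c: "0 \<le> c" and e: "0 \<le> \<epsilon>"
  shows "a n y \<le> \<epsilon> * real n + 2 * real K * c + birkhoff_sum (control K c \<epsilon>) n y"
proof -
  have Kr: "0 < real K" using K by simp
  define B where "B = {b. b + K \<le> n}"
  have B: "B \<subseteq> {..<n}" unfolding B_def using K by auto
  define G where "G = (\<Sum>b<n. excess K \<epsilon> ((T ^^ b) y))"
  define R where "R = (\<Sum>i<n. tail c ((T ^^ i) y))"
  have blocks: "(\<Sum>b\<in>B. a K ((T ^^ b) y)) \<le> \<epsilon> * real K * real n + G"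
  proof -
    have "(\<Sum>b\<in>B. a K ((T ^^ b) y)) \<le> (\<Sum>b\<in>B. \<epsilon> * real K + excess K \<epsilon> ((T ^^ b) y))"
      unfolding excess_def by (intro sum_mono) auto
    also have "\<dots> = \<epsilon> * real K * real (card B) + (\<Sum>b\<in>B. excess K \<epsilon> ((T ^^ b) y))"
      by (simp add: sum.distrib)
    also have "\<epsilon> * real K * real (card B) \<le> \<epsilon> * real K * real n"
      using card_mono[OF _ B] e Kr by (intro mult_left_mono) auto
    also have "(\<Sum>b\<in>B. excess K \<epsilon> ((T ^^ b) y)) \<le> G"
      unfolding G_def using B excess_nonneg by (intro sum_mono2) auto
    finally show ?thesis by simp
  qed
  have edges: "(\<Sum>i\<in>edge_indices K n. abs_a1 ((T ^^ i) y)) \<le> 2 * real K * c + R"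
  proof -
    have "(\<Sum>i\<in>edge_indices K n. abs_a1 ((T ^^ i) y))
            \<le> (\<Sum>i\<in>edge_indices K n. c + tail c ((T ^^ i) y))"
      unfolding tail_def by (intro sum_mono) auto
    also have "\<dots> = c * real (card (edge_indices K n)) + (\<Sum>i\<in>edge_indices K n. tail c ((T ^^ i) y))"
      by (simp add: sum.distrib mult.commute)
    also have "c * real (card (edge_indices K n)) \<le> c * (2 * real K)"
      using card_edge_indices[of K n] c by (intro mult_left_mono) auto
    also have "(\<Sum>i\<in>edge_indices K n. tail c ((T ^^ i) y)) \<le> R"
      unfolding R_def using tail_nonneg by (intro sum_mono2) (auto simp: edge_indices_def)
    finally show ?thesis by (simp add: algebra_simps)
  qed
  have "real K * a n y \<le> \<epsilon> * real K * real n + G + real K * (2 * real K * c + R)"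
    using a_le_block_average[OF y, of K n] blocks mult_left_mono[OF edges, of "real K"] Kr
    unfolding B_def by linarith
  also have "\<dots> = real K * (\<epsilon> * real n + 2 * real K * c + (G / real K + R))"
    using Kr by (simp add: field_simps)
  finally have "a n y \<le> \<epsilon> * real n + 2 * real K * c + (G / real K + R)"
    using Kr by (simp add: mult_le_cancel_left_pos)
  moreover have "birkhoff_sum (control K c \<epsilon>) n y = G / real K + R"
    unfolding birkhoff_sum_def control_def G_def R_def by (simp add: sum.distrib sum_divide_distrib)
  ultimately show ?thesis by simp
qed

definition drop_set :: "real \<Rightarrow> nat \<Rightarrow> nat \<Rightarrow> 'a set" where
  "drop_set \<tau> L m =
     {x \<in> space M. \<exists>l. L \<le> l \<and> l \<le> m \<and> a m x - a (m - l) ((T ^^ l) x) < - \<tau> * real l}"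

lemma sets_drop_set[measurable]: "drop_set \<tau> L m \<in> sets M"
  unfolding drop_set_def by measurable

lemma drop_set_antimono:
  assumes "\<tau> \<le> \<tau>'" "L \<le> L'"
  shows "drop_set \<tau>' L' m \<subseteq> drop_set \<tau> L m"
proof
  fix x assume "x \<in> drop_set \<tau>' L' m"
  then obtain l where l: "x \<in> space M" "L' \<le> l" "l \<le> m" "a m x - a (m - l) ((T ^^ l) x) < - \<tau>' * real l"
    unfolding drop_set_def by auto
  moreover have "\<tau> * real l \<le> \<tau>' * real l" using assms by (intro mult_right_mono) auto
  ultimately have "L \<le> l \<and> l \<le> m \<and> a m x - a (m - l) ((T ^^ l) x) < - \<tau> * real l"
    using assms by linarith
  then show "x \<in> drop_set \<tau> L m" using l(1) unfolding drop_set_def by blast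
qed

lemma drop_set_empty: "m < L \<Longrightarrow> drop_set \<tau> L m = {}"
  unfolding drop_set_def by auto

lemma a_le_card_drops:
  assumes \<omega>: "subadditive_at \<omega>" and tau: "0 < \<tau>" and L: "1 \<le> L" and K: "1 \<le> K" and c: "0 \<le> c"
    and e: "0 \<le> \<epsilon>" and cond: "4 * real K * c \<le> \<tau> * real L"
  shows "a n \<omega> \<le> - (\<tau> / 2) * real (card {j. j < n \<and> (T ^^ j) \<omega> \<in> drop_set \<tau> L (n - j)})
           + \<epsilon> * real n + birkhoff_sum (control K c \<epsilon>) n \<omega> + 2 * real K * c"
proof -
  let ?\<phi> = "control K c \<epsilon>"
  define G where "G j = a (n - j) ((T ^^ j) \<omega>) - \<epsilon> * real (n - j) - birkhoff_sum ?\<phi> (n - j) ((T ^^ j) \<omega>)"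
    for j
  have split: "birkhoff_sum ?\<phi> (n - j) ((T ^^ j) \<omega>)
                 = birkhoff_sum ?\<phi> (k - j) ((T ^^ j) \<omega>) + birkhoff_sum ?\<phi> (n - k) ((T ^^ k) \<omega>)"
    if "j \<le> k" "k \<le> n" for j k
    using birkhoff_sum_add[of ?\<phi> "k - j" "n - k" "(T ^^ j) \<omega>"] that by (simp add: Tn_add[symmetric])
  have "G 0 \<le> - (\<tau> / 2) * real (card {j. j < n \<and> j \<in> {j. (T ^^ j) \<omega> \<in> drop_set \<tau> L (n - j)}})
                + 2 * real K * c"
  proof (rule greedy_drop_bound[OF _ _ _ L tau])
    show "G n \<le> 0" unfolding G_def using a_0 Tn_in_space subadditive_at_space[OF \<omega>] by simp
  next
    fix j assume j: "j < n" "j \<in> {j. (T ^^ j) \<omega> \<in> drop_set \<tau> L (n - j)}"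
    then obtain l where l: "L \<le> l" "l \<le> n - j"
      "a (n - j) ((T ^^ j) \<omega>) - a (n - (j + l)) ((T ^^ (j + l)) \<omega>) < - \<tau> * real l"
      unfolding drop_set_def by (auto simp: Tn_add)
    moreover have "0 \<le> birkhoff_sum ?\<phi> l ((T ^^ j) \<omega>)" by (rule birkhoff_sum_nonneg[OF control_nonneg])
    moreover have "\<epsilon> * real (n - (j + l)) \<le> \<epsilon> * real (n - j)" using e by (intro mult_left_mono) auto
    moreover have jl: "j + l \<le> n" using l(2) j(1) by simp
    ultimately have "G j \<le> G (j + l) - \<tau> * real l"
      unfolding G_def using split[of j "j + l"] by simp
    then show "\<exists>l\<ge>L. j + l \<le> n \<and> G j \<le> G (j + l) - \<tau> * real l" using l(1) jl by auto
  next
    fix j k assume jk: "j \<le> k" "k \<le> n"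
    have \<omega>': "subadditive_at ((T ^^ j) \<omega>)" by (rule subadditive_at_Tn[OF \<omega>])
    have "a (n - j) ((T ^^ j) \<omega>) \<le> a (k - j) ((T ^^ j) \<omega>) + a (n - k) ((T ^^ k) \<omega>)"
      using subadditive_atD[OF \<omega>', of "k - j" "n - k"] jk by (simp add: Tn_add[symmetric])
    moreover have "a (k - j) ((T ^^ j) \<omega>)
                     \<le> \<epsilon> * real (k - j) + 2 * real K * c + birkhoff_sum ?\<phi> (k - j) ((T ^^ j) \<omega>)"
      by (rule a_le_birkhoff_sum_control[OF \<omega>' K c e])
    ultimately show "G j \<le> G k + 2 * real K * c"
      unfolding G_def using split[OF jk] jk by (simp add: of_nat_diff algebra_simps)
  qed (use c cond in auto)
  then show ?thesis unfolding G_def by simp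
qed

text \<open>Integrating \<open>a_le_card_drops\<close> against \<open>\<integral>a\<^sub>n \<ge> 0\<close>; by invariance of \<open>M\<close> the expected number
  of drop times is the sum of the measures of the drop sets.\<close>
lemma sum_measure_drop_set_le:
  assumes tau: "0 < \<tau>" and L: "1 \<le> L" and K: "1 \<le> K" and c: "0 \<le> c"
    and e: "0 \<le> \<epsilon>" and cond: "4 * real K * c \<le> \<tau> * real L"
  shows "(\<Sum>m\<in>{1..n}. measure M (drop_set \<tau> L m))
           \<le> (2 / \<tau>) * ((\<epsilon> + integral\<^sup>L M (control K c \<epsilon>)) * real n + 2 * real K * c)"
proof -
  define cnt where "cnt x = (\<Sum>j<n. indicator (drop_set \<tau> L (n - j)) ((T ^^ j) x) :: real)" for x
  have cnt_int: "integrable M cnt"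
    unfolding cnt_def using integrable_Tn[OF integrable_indicator_real[OF sets_drop_set]] by auto
  have "integral\<^sup>L M cnt = (\<Sum>j<n. measure M (drop_set \<tau> L (n - j)))"
    unfolding cnt_def using integrable_Tn[OF integrable_indicator_real[OF sets_drop_set]]
    by (simp add: integral_sum integral_indicator_Tn)
  also have "\<dots> = (\<Sum>m\<in>{1..n}. measure M (drop_set \<tau> L m))"
    by (rule sum.reindex_bij_witness[where j = "\<lambda>j. n - j" and i = "\<lambda>m. n - m"]) auto
  finally have cnt_integral: "integral\<^sup>L M cnt = (\<Sum>m\<in>{1..n}. measure M (drop_set \<tau> L m))" .
  define R where "R x = \<epsilon> * real n + 2 * real K * c + birkhoff_sum (control K c \<epsilon>) n x - (\<tau> / 2) * cnt x"
    for x
  have R_int: "integrable M R"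
    unfolding R_def using integrable_birkhoff_sum[OF integrable_control] cnt_int by auto
  have "AE x in M. a n x \<le> R x"
    using AE_subadditive_at
  proof eventually_elim
    case (elim x)
    show ?case
      using a_le_card_drops[OF elim tau L K c e cond, of n]
        card_eq_sum_indicator[of n x "\<lambda>j. (T ^^ j) -` drop_set \<tau> L (n - j)"]
      unfolding R_def cnt_def by (simp add: indicator_def)
  qed
  then have "integral\<^sup>L M (a n) \<le> integral\<^sup>L M R"
    using integrable_a R_int by (intro integral_mono_AE) auto
  also have "integral\<^sup>L M R = \<epsilon> * real n + 2 * real K * c
               + real n * integral\<^sup>L M (control K c \<epsilon>) - (\<tau> / 2) * integral\<^sup>L M cnt"
    unfolding R_def using integrable_birkhoff_sum[OF integrable_control] cnt_int
      integral_birkhoff_sum[OF integrable_control] by (simp add: prob_space)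
  finally have "(\<tau> / 2) * integral\<^sup>L M cnt \<le> (\<epsilon> + integral\<^sup>L M (control K c \<epsilon>)) * real n + 2 * real K * c"
    using integral_a_nonneg[of n] by (simp add: algebra_simps)
  then show ?thesis using tau cnt_integral by (simp add: field_simps)
qed

lemma exists_drop_threshold:
  assumes tau: "0 < \<tau>" and h: "0 < \<eta>"
  shows "\<exists>L0\<ge>1. \<forall>L\<ge>L0. \<forall>n. (\<Sum>m\<in>{1..n}. measure M (drop_set \<tau> L m)) \<le> \<eta> * real n"
proof -
  obtain K c where Kc: "1 \<le> K" "0 \<le> c" "integral\<^sup>L M (control K c (\<eta> * \<tau> / 8)) < \<eta> * \<tau> / 8"
    using exists_integral_control_less[of "\<eta> * \<tau> / 8" "\<eta> * \<tau> / 8"] tau h by auto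
  define C where "C = 4 * real K * c / \<tau>"
  obtain L0 :: nat where L0: "max C (2 * C / \<eta>) \<le> real L0" using real_nat_ceiling_ge by blast
  have "(\<Sum>m\<in>{1..n}. measure M (drop_set \<tau> L m)) \<le> \<eta> * real n" if L: "L \<ge> Suc L0" for L n
  proof (cases "n < L")
    case True
    then show ?thesis using h by (simp add: drop_set_empty)
  next
    case False
    have "C \<le> real L" using L0 L by linarith
    then have "4 * real K * c \<le> \<tau> * real L"
      using tau unfolding C_def by (simp add: field_simps)
    then have "(\<Sum>m\<in>{1..n}. measure M (drop_set \<tau> L m))
           \<le> (2 / \<tau>) * ((\<eta> * \<tau> / 8 + integral\<^sup>L M (control K c (\<eta> * \<tau> / 8))) * real n + 2 * real K * c)"
      using L tau h Kc by (intro sum_measure_drop_set_le) auto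
    also have "\<dots> \<le> (2 / \<tau>) * ((\<eta> * \<tau> / 4) * real n + 2 * real K * c)"
      using Kc(3) tau by (intro mult_left_mono add_right_mono mult_right_mono) auto
    also have "\<dots> = \<eta> / 2 * real n + C" unfolding C_def using tau by (simp add: field_simps)
    also have "C \<le> \<eta> / 2 * real n"
    proof -
      have "2 * C / \<eta> \<le> real n" using L0 L False by linarith
      then show ?thesis using h by (simp add: field_simps)
    qed
    finally show ?thesis by simp
  qed
  then show ?thesis by (intro exI[of _ "Suc L0"]) auto
qed

lemma exists_drop_scale:
  assumes h: "0 < \<eta>"
  shows "\<exists>D\<ge>1. \<exists>C. \<forall>D'\<ge>D. \<forall>n. (\<Sum>m\<in>{1..n}. measure M (drop_set D' 1 m)) \<le> \<eta> * real n + C"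
proof -
  obtain K c where Kc: "1 \<le> K" "0 \<le> c" "integral\<^sup>L M (control K c (\<eta> / 4)) < \<eta> / 4"
    using exists_integral_control_less[of "\<eta> / 4" "\<eta> / 4"] h by auto
  define D where "D = max 1 (4 * real K * c)"
  have D1: "1 \<le> D" unfolding D_def by simp
  have "(\<Sum>m\<in>{1..n}. measure M (drop_set D' 1 m)) \<le> \<eta> * real n + 4 * real K * c"
    if D': "D' \<ge> D" for D' n
  proof -
    have "(\<Sum>m\<in>{1..n}. measure M (drop_set D' 1 m)) \<le> (\<Sum>m\<in>{1..n}. measure M (drop_set D 1 m))"
      using drop_set_antimono[of D D' 1 1] D' by (intro sum_mono finite_measure_mono) auto
    also have "\<dots> \<le> (2 / D) * ((\<eta> / 4 + integral\<^sup>L M (control K c (\<eta> / 4))) * real n + 2 * real K * c)"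
      using D1 h Kc by (intro sum_measure_drop_set_le) (auto simp: D_def)
    also have "\<dots> \<le> (2 / D) * ((\<eta> / 2) * real n + 2 * real K * c)"
      using Kc(3) D1 by (intro mult_left_mono add_right_mono mult_right_mono) auto
    also have "\<dots> = (\<eta> * real n + 4 * real K * c) / D" using D1 by (simp add: field_simps)
    also have "\<dots> \<le> (\<eta> * real n + 4 * real K * c) / 1"
      using D1 h Kc by (intro divide_left_mono) auto
    finally show ?thesis by simp
  qed
  then show ?thesis using D1 by blast
qed

section \<open>Tolerances and the density of good times\<close>

definition bad_set :: "(nat \<Rightarrow> real) \<Rightarrow> nat \<Rightarrow> 'a set" where
  "bad_set \<delta> m = {x \<in> space M. \<exists>l. 1 \<le> l \<and> l \<le> m \<and> real l * \<delta> l < \<bar>a m x - a (m - l) ((T ^^ l) x)\<bar>}"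

lemma sets_bad_set[measurable]: "bad_set \<delta> m \<in> sets M"
  unfolding bad_set_def by measurable

definition exceptional_set :: "real \<Rightarrow> (nat \<Rightarrow> nat) \<Rightarrow> 'a set" where
  "exceptional_set D L = exceed_set D 1 \<union> (\<Union>i. exceed_set (1 / real (Suc i)) (L i))"

lemma sets_exceptional_set[measurable]: "exceptional_set D L \<in> sets M"
  unfolding exceptional_set_def by measurable

definition drop_set_union :: "real \<Rightarrow> (nat \<Rightarrow> nat) \<Rightarrow> nat \<Rightarrow> 'a set" where
  "drop_set_union D L m = drop_set D 1 m \<union> (\<Union>i<m. drop_set (1 / real (Suc i)) (L i) m)"

lemma sets_drop_set_union[measurable]: "drop_set_union D L m \<in> sets M"
  unfolding drop_set_union_def by measurable

text \<open>Outside the exceptional set, \<open>a\<close> cannot deviate upwards; a downward deviation beyond the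
  tolerance is a drop, of length at least the threshold belonging to that tolerance.\<close>
lemma bad_set_subset_drop_set_union:
  assumes \<omega>: "subadditive_at \<omega>" and E: "\<omega> \<notin> exceptional_set D L"
    and B: "\<omega> \<in> bad_set (tolerance D L) m"
  shows "\<omega> \<in> drop_set_union D L m"
proof -
  let ?\<delta> = "tolerance D L"
  have sp: "\<omega> \<in> space M" by (rule subadditive_at_space[OF \<omega>])
  obtain l where l: "1 \<le> l" "l \<le> m" "real l * ?\<delta> l < \<bar>a m \<omega> - a (m - l) ((T ^^ l) \<omega>)\<bar>"
    using B unfolding bad_set_def by auto
  have up: "a m \<omega> - a (m - l) ((T ^^ l) \<omega>) \<le> a l \<omega>"
    using subadditive_atD[OF \<omega>, of l "m - l"] l by simp
  show ?thesis
  proof (cases "a m \<omega> - a (m - l) ((T ^^ l) \<omega>) < 0")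
    case True
    then have low: "a m \<omega> - a (m - l) ((T ^^ l) \<omega>) < - ?\<delta> l * real l"
      using l(3) by (simp add: mult.commute)
    from tolerance_cases[of D L l] show ?thesis
    proof
      assume "?\<delta> l = D"
      then have "\<omega> \<in> drop_set D 1 m" unfolding drop_set_def using low l sp by auto
      then show ?thesis unfolding drop_set_union_def by auto
    next
      assume "\<exists>i<l. L i \<le> l \<and> ?\<delta> l = 1 / real (Suc i)"
      then obtain i where i: "i < l" "L i \<le> l" "?\<delta> l = 1 / real (Suc i)" by auto
      then have "\<omega> \<in> drop_set (1 / real (Suc i)) (L i) m"
        unfolding drop_set_def using low l sp by auto
      then show ?thesis unfolding drop_set_union_def using i l by auto
    qed
  next
    case False
    then have exceed: "?\<delta> l * real l < a l \<omega>" using l(3) up by (simp add: mult.commute)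
    from tolerance_cases[of D L l] have "\<omega> \<in> exceptional_set D L"
    proof
      assume "?\<delta> l = D"
      then have "\<omega> \<in> exceed_set D 1" unfolding exceed_set_def using exceed l sp by auto
      then show ?thesis unfolding exceptional_set_def by auto
    next
      assume "\<exists>i<l. L i \<le> l \<and> ?\<delta> l = 1 / real (Suc i)"
      then obtain i where i: "L i \<le> l" "?\<delta> l = 1 / real (Suc i)" by auto
      then have "\<omega> \<in> exceed_set (1 / real (Suc i)) (L i)"
        unfolding exceed_set_def using exceed sp by auto
      then show ?thesis unfolding exceptional_set_def by auto
    qed
    then show ?thesis using E by contradiction
  qed
qed

lemma measure_exceptional_set_le:
  assumes \<eta>: "0 \<le> \<eta>" and D: "measure M (exceed_set D 1) < \<eta> / 2"
    and L: "\<And>i. measure M (exceed_set (1 / real (Suc i)) (L i)) < \<eta> / 2 ^ (i + 2)"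
  shows "measure M (exceptional_set D L) \<le> \<eta>"
proof -
  have "emeasure M (\<Union>i. exceed_set (1 / real (Suc i)) (L i))
          \<le> (\<Sum>i. emeasure M (exceed_set (1 / real (Suc i)) (L i)))"
    by (intro emeasure_subadditive_countably) auto
  also have "\<dots> \<le> (\<Sum>i. ennreal (\<eta> / 2 ^ (i + 2)))"
    using L by (intro suminf_le) (auto simp: emeasure_eq_measure less_imp_le ennreal_leI simp del: of_nat_Suc)
  also have "\<dots> = ennreal (\<eta> / 2)"
    using sums_geometric_quarter[of \<eta>] \<eta> by (subst suminf_ennreal2) (auto simp: sums_iff)
  finally have "measure M (\<Union>i. exceed_set (1 / real (Suc i)) (L i)) \<le> \<eta> / 2"
    using \<eta> by (simp add: emeasure_eq_measure)
  then show ?thesis unfolding exceptional_set_def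
    using measure_Un_le[of "exceed_set D 1" M "\<Union>i. exceed_set (1 / real (Suc i)) (L i)"] D by auto
qed

lemma sum_measure_drop_set_union_le:
  assumes \<eta>: "0 \<le> \<eta>"
    and D: "\<And>n. (\<Sum>m\<in>{1..n}. measure M (drop_set D 1 m)) \<le> \<eta> / 2 * real n + C"
    and L: "\<And>i n. (\<Sum>m\<in>{1..n}. measure M (drop_set (1 / real (Suc i)) (L i) m)) \<le> \<eta> / 2 ^ (i + 2) * real n"
  shows "(\<Sum>m\<in>{1..n}. measure M (drop_set_union D L m)) \<le> \<eta> * real n + C"
proof -
  let ?dL = "\<lambda>i m. measure M (drop_set (1 / real (Suc i)) (L i) m)"
  have "(\<Sum>m\<in>{1..n}. measure M (drop_set_union D L m))
          \<le> (\<Sum>m\<in>{1..n}. measure M (drop_set D 1 m) + (\<Sum>i<n. ?dL i m))"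
  proof (rule sum_mono)
    fix m assume m: "m \<in> {1..n}"
    have "measure M (drop_set_union D L m)
            \<le> measure M (drop_set D 1 m) + measure M (\<Union>i<m. drop_set (1 / real (Suc i)) (L i) m)"
      unfolding drop_set_union_def by (intro measure_Un_le) auto
    also have "measure M (\<Union>i<m. drop_set (1 / real (Suc i)) (L i) m) \<le> (\<Sum>i<m. ?dL i m)"
      by (intro measure_UNION_le) auto
    also have "\<dots> \<le> (\<Sum>i<n. ?dL i m)" using m by (intro sum_mono2) auto
    finally show "measure M (drop_set_union D L m) \<le> measure M (drop_set D 1 m) + (\<Sum>i<n. ?dL i m)"
      by simp
  qed
  also have "\<dots> = (\<Sum>m\<in>{1..n}. measure M (drop_set D 1 m)) + (\<Sum>i<n. \<Sum>m\<in>{1..n}. ?dL i m)"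
    using sum.swap[of "\<lambda>m i. ?dL i m" "{..<n}" "{1..n}"] by (simp add: sum.distrib)
  also have "(\<Sum>i<n. \<Sum>m\<in>{1..n}. ?dL i m) \<le> (\<Sum>i<n. \<eta> / 2 ^ (i + 2)) * real n"
    using L by (simp add: sum_distrib_right sum_mono)
  also have "(\<Sum>i<n. \<eta> / 2 ^ (i + 2)) \<le> \<eta> / 2"
    using sums_geometric_quarter[of \<eta>] \<eta>
    by (subst sums_unique[OF sums_geometric_quarter[of \<eta>]]) (intro sum_le_suminf, auto simp: sums_iff)
  finally show ?thesis using D[of n] by (simp add: mult_right_mono)
qed

lemma exists_tolerance_parameters:
  assumes \<eta>: "0 < \<eta>"
  shows "\<exists>D L C. 0 < D \<and> measure M (exceptional_set D L) \<le> \<eta> \<and>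
           (\<forall>n. (\<Sum>m\<in>{1..n}. measure M (drop_set_union D L m)) \<le> \<eta> * real n + C)"
proof -
  obtain D0 C where D0: "1 \<le> D0"
    "\<And>D n. D \<ge> D0 \<Longrightarrow> (\<Sum>m\<in>{1..n}. measure M (drop_set D 1 m)) \<le> \<eta> / 2 * real n + C"
    using exists_drop_scale[of "\<eta> / 2"] \<eta> by auto
  obtain D1 where D1: "1 \<le> D1" "measure M (exceed_set D1 1) < \<eta> / 2"
    using exists_measure_exceed_set_less[of "\<eta> / 2"] \<eta> by auto
  define D where "D = max D0 D1"
  have "measure M (exceed_set D 1) < \<eta> / 2"
    using finite_measure_mono[OF exceed_set_antimono[of D1 D 1 1]] D1 unfolding D_def by fastforce
  moreover have "\<exists>L. (\<forall>n. (\<Sum>m\<in>{1..n}. measure M (drop_set (1 / real (Suc i)) L m)) \<le> \<eta> / 2 ^ (i + 2) * real n)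
                      \<and> measure M (exceed_set (1 / real (Suc i)) L) < \<eta> / 2 ^ (i + 2)" for i
  proof -
    have pos: "0 < 1 / real (Suc i)" "0 < \<eta> / 2 ^ (i + 2)" using \<eta> by auto
    obtain L0 where "\<And>L n. L \<ge> L0 \<Longrightarrow>
        (\<Sum>m\<in>{1..n}. measure M (drop_set (1 / real (Suc i)) L m)) \<le> \<eta> / 2 ^ (i + 2) * real n"
      using exists_drop_threshold[OF pos] by auto
    moreover obtain L1 where "\<And>L. L \<ge> L1 \<Longrightarrow> measure M (exceed_set (1 / real (Suc i)) L) < \<eta> / 2 ^ (i + 2)"
      using eventually_measure_exceed_set_less[OF pos] unfolding eventually_sequentially by auto
    ultimately show ?thesis by (intro exI[of _ "L0 + L1"]) auto
  qed
  then obtain L where L: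
    "\<And>i n. (\<Sum>m\<in>{1..n}. measure M (drop_set (1 / real (Suc i)) (L i) m)) \<le> \<eta> / 2 ^ (i + 2) * real n"
    "\<And>i. measure M (exceed_set (1 / real (Suc i)) (L i)) < \<eta> / 2 ^ (i + 2)"
    by metis
  ultimately have "measure M (exceptional_set D L) \<le> \<eta>"
    using \<eta> by (intro measure_exceptional_set_le) auto
  moreover have "(\<Sum>m\<in>{1..n}. measure M (drop_set_union D L m)) \<le> \<eta> * real n + C" for n
    using \<eta> D0 L(1) by (intro sum_measure_drop_set_union_le) (auto simp: D_def)
  moreover have "0 < D" using D0 unfolding D_def by simp
  ultimately show ?thesis by blast
qed

lemma pred_subadditive_at[measurable]: "Measurable.pred M subadditive_at"
  unfolding subadditive_at_def by measurable

definition regular_set :: "real \<Rightarrow> (nat \<Rightarrow> nat) \<Rightarrow> 'a set" where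
  "regular_set D L = {x \<in> space M. subadditive_at x} - exceptional_set D L"

lemma sets_regular_set[measurable]: "regular_set D L \<in> sets M"
  unfolding regular_set_def by measurable

lemma measure_compl_regular_set_le:
  "measure M (space M - regular_set D L) \<le> measure M (exceptional_set D L)"
proof -
  have "measure M (space M - regular_set D L)
          \<le> measure M ({x \<in> space M. \<not> subadditive_at x} \<union> exceptional_set D L)"
    unfolding regular_set_def by (intro finite_measure_mono) auto
  also have "\<dots> \<le> measure M {x \<in> space M. \<not> subadditive_at x} + measure M (exceptional_set D L)"
    by (intro measure_Un_le) auto
  also have "measure M {x \<in> space M. \<not> subadditive_at x} = 0"
    using AE_subadditive_at by (simp add: AE_iff_measurable[OF _ refl] measure_def)
  finally show ?thesis by simp
qed

lemma sum_measure_bad_set_le: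
  assumes "\<And>n. (\<Sum>m\<in>{1..n}. measure M (drop_set_union D L m)) \<le> \<eta> * real n + C"
  shows "(\<Sum>m<N. measure M (bad_set (tolerance D L) m \<inter> regular_set D L)) \<le> \<eta> * real N + C"
proof -
  let ?B = "\<lambda>m. bad_set (tolerance D L) m \<inter> regular_set D L"
  have "(\<Sum>m<N. measure M (?B m)) \<le> (\<Sum>m\<in>insert 0 {1..N}. measure M (?B m))"
    by (intro sum_mono2) auto
  also have "\<dots> = (\<Sum>m\<in>{1..N}. measure M (?B m))"
    unfolding bad_set_def by simp
  also have "\<dots> \<le> (\<Sum>m\<in>{1..N}. measure M (drop_set_union D L m))"
    using bad_set_subset_drop_set_union unfolding regular_set_def
    by (intro sum_mono finite_measure_mono) auto
  finally show ?thesis using assms[of N] by linarith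
qed

lemma exists_tolerance_upper_density:
  assumes \<rho>: "0 < \<rho>"
  shows "\<exists>\<delta> :: nat \<Rightarrow> real. (\<forall>l. \<delta> l > 0) \<and> \<delta> \<longlonglongrightarrow> 0 \<and>
           (\<exists>Ob \<in> sets M. measure M Ob \<ge> 1 - \<rho> \<and>
              (\<forall>\<omega> \<in> Ob. upper_density
                 {n. \<forall>l\<in>{1..n}. \<bar>a n \<omega> - a (n - l) ((T ^^ l) \<omega>)\<bar> \<le> real l * \<delta> l} \<ge> ereal (1 - \<rho>)))"
proof -
  define \<eta> where "\<eta> = \<rho> * min 1 \<rho> / 2"
  have \<eta>: "0 < \<eta>" "\<eta> + \<eta> / \<rho> \<le> \<rho>"
    unfolding \<eta>_def using \<rho> by (auto simp: min_def field_simps)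
  obtain D L C where D: "0 < D" and E: "measure M (exceptional_set D L) \<le> \<eta>"
    and drops: "\<And>n. (\<Sum>m\<in>{1..n}. measure M (drop_set_union D L m)) \<le> \<eta> * real n + C"
    using exists_tolerance_parameters[OF \<eta>(1)] by blast
  define \<delta> where "\<delta> = tolerance D L"
  define B where "B m = bad_set \<delta> m \<inter> regular_set D L" for m
  define F where "F = {x \<in> space M.
    ennreal \<rho> \<le> liminf (\<lambda>N. ennreal (real (card {m. m < N \<and> x \<in> B m}) / real N))}"
  have [measurable]: "B m \<in> sets M" for m unfolding B_def by measurable
  have [measurable]: "F \<in> sets M" unfolding F_def card_eq_sum_indicator by measurable
  have "measure M F \<le> \<eta> / \<rho>"
    unfolding F_def B_def \<delta>_def using \<eta>(1) \<rho> sum_measure_bad_set_le[OF drops]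
    by (intro prob_liminf_frequency_ge) auto
  moreover have "measure M (space M - regular_set D L) \<le> \<eta>"
    using measure_compl_regular_set_le E by (rule order.trans)
  moreover have "measure M (space M - (regular_set D L - F))
                   \<le> measure M (space M - regular_set D L) + measure M F"
    by (intro order.trans[OF finite_measure_mono measure_Un_le]) auto
  ultimately have "measure M (regular_set D L - F) \<ge> 1 - \<rho>"
    using \<eta>(2) prob_compl[of "regular_set D L - F"] by simp
  moreover have "ereal (1 - \<rho>) \<le> upper_density
      {n. \<forall>l\<in>{1..n}. \<bar>a n \<omega> - a (n - l) ((T ^^ l) \<omega>)\<bar> \<le> real l * \<delta> l}"
    if \<omega>: "\<omega> \<in> regular_set D L - F" for \<omega>
  proof (rule upper_density_ge_of_liminf_compl_less)
    have "\<omega> \<in> space M" using \<omega> sets.sets_into_space[OF sets_regular_set] by blast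
    have "{..<N} - {n. \<forall>l\<in>{1..n}. \<bar>a n \<omega> - a (n - l) ((T ^^ l) \<omega>)\<bar> \<le> real l * \<delta> l}
            = {m. m < N \<and> \<omega> \<in> B m}" for N
      using \<omega> \<open>\<omega> \<in> space M\<close> unfolding B_def bad_set_def
      by (auto simp: not_le) (meson atLeastAtMost_iff not_le)
    then show "liminf (\<lambda>N. ennreal (real (card ({..<N} -
        {n. \<forall>l\<in>{1..n}. \<bar>a n \<omega> - a (n - l) ((T ^^ l) \<omega>)\<bar> \<le> real l * \<delta> l})) / real N)) < ennreal \<rho>"
      using \<omega> \<open>\<omega> \<in> space M\<close> unfolding F_def by auto
  qed
  moreover have "regular_set D L - F \<in> sets M" by measurable
  ultimately show ?thesis
    using tolerance_pos[OF D] tolerance_tendsto_0[OF D] unfolding \<delta>_def by blast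
qed

end

lemma (in ergodic_mpt) centered_subcocycle_minus_A:
  fixes a :: "nat \<Rightarrow> 'a \<Rightarrow> real"
  assumes [measurable]: "\<And>n. a n \<in> borel_measurable M"
    and a0: "\<And>x. x \<in> space M \<Longrightarrow> a 0 x = 0"
    and sub: "\<And>n m. 0 < n \<Longrightarrow> 0 < m \<Longrightarrow> AE x in M. a (n + m) x \<le> a n x + a m ((T ^^ n) x)"
    and a1: "integrable M (a 1)"
    and A: "A = (INF n\<in>{1..}. ext_integral M (a n) / ereal (real n))" "\<bar>A\<bar> \<noteq> \<infinity>"
  shows "centered_subcocycle M T (\<lambda>n x. a n x - real n * real_of_ereal A)"
proof -
  define A0 where "A0 = real_of_ereal A"
  have AA0: "A = ereal A0" unfolding A0_def using A(2) by (cases A) auto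
  have le_A: "A \<le> ext_integral M (a n) / ereal (real n)" if "1 \<le> n" for n
    unfolding A(1) using that by (intro INF_lower) auto
  have int: "integrable M (a n)" for n
  proof (cases "n = 0")
    case True
    have "integrable M (a 0) \<longleftrightarrow> integrable M (\<lambda>x. 0 :: real)"
      by (rule Bochner_Integration.integrable_cong) (use a0 in auto)
    then show ?thesis using True by simp
  next
    case False
    then have "ext_integral M (a n) \<noteq> -\<infinity>" using le_A[of n] AA0 by auto
    then show ?thesis using integrable_subadditive[OF assms(1) a0 sub a1] by blast
  qed
  have integral_0: "integral\<^sup>L M (a 0) = 0"
    using Bochner_Integration.integral_cong[of M M "a 0" "\<lambda>x. 0"] a0 by simp
  have avg: "A0 \<le> integral\<^sup>L M (a n) / real n" if "1 \<le> n" for n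
    using le_A[OF that] that ext_integral_eq_integral[OF int] AA0 by simp
  show ?thesis unfolding A0_def[symmetric]
  proof unfold_locales
    show "(\<lambda>x. a n x - real n * A0) \<in> borel_measurable M" for n by measurable
    show "a 0 x - real 0 * A0 = 0" if "x \<in> space M" for x using a0[OF that] by simp
    show "integrable M (\<lambda>x. a n x - real n * A0)" for n using int[of n] by simp
    show "AE x in M. a (n + m) x - real (n + m) * A0 \<le> a n x - real n * A0 + (a m ((T ^^ n) x) - real m * A0)"
      if "0 < n" "0 < m" for n m
      using sub[OF that] by eventually_elim (simp add: algebra_simps)
    show "0 \<le> integral\<^sup>L M (\<lambda>x. a n x - real n * A0)" for n
      using avg[of n] int[of n] integral_0 by (cases "n = 0") (simp_all add: prob_space field_simps)
    show "\<exists>K\<ge>1. integral\<^sup>L M (\<lambda>x. a K x - real K * A0) \<le> \<tau> * real K" if "0 < \<tau>" for \<tau> :: real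
    proof -
      have "A < ereal (A0 + \<tau>)" using AA0 that by simp
      then obtain K where "1 \<le> K" "ext_integral M (a K) / ereal (real K) < ereal (A0 + \<tau>)"
        unfolding A(1) INF_less_iff by auto
      then show ?thesis
        using ext_integral_eq_integral[OF int] int[of K] by (intro exI[of _ K]) (simp add: prob_space field_simps)
    qed
  qed
qed

theorem mainTheorem2:
  fixes M :: "'w measure" and T :: "'w \<Rightarrow> 'w" and a :: "nat \<Rightarrow> 'w \<Rightarrow> real"
    and A :: ereal and \<rho> :: real
  assumes "prob_space M"
    and "ergodic_map M T"
    and "\<And>n. a n \<in> borel_measurable M"
    and "\<And>\<omega>. \<omega> \<in> space M \<Longrightarrow> a 0 \<omega> = 0"
    and "\<And>n m. n > 0 \<Longrightarrow> m > 0 \<Longrightarrow>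
           AE \<omega> in M. a (n + m) \<omega> \<le> a n \<omega> + a m ((T ^^ n) \<omega>)"
    and "integrable M (a 1)"
    and "A = (INF n\<in>{1..}. ext_integral M (a n) / ereal (real n))"
    and "\<bar>A\<bar> \<noteq> \<infinity>"
    and "\<rho> > 0"
  shows "\<exists>\<delta> :: nat \<Rightarrow> real. (\<forall>l. \<delta> l > 0) \<and> \<delta> \<longlonglongrightarrow> 0 \<and>
           (\<exists>Ob \<in> sets M. measure M Ob \<ge> 1 - \<rho> \<and>
              (\<forall>\<omega> \<in> Ob. upper_density
                 {n. \<forall>l\<in>{1..n}. \<bar>a n \<omega> - a (n - l) ((T ^^ l) \<omega>) - real_of_ereal A * real l\<bar>
                        \<le> real l * \<delta> l} \<ge> ereal (1 - \<rho>)))"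
proof -
  interpret ergodic_mpt M T
    using assms(1,2) unfolding ergodic_map_def measure_preserving_map_def
    by (intro ergodic_mpt.intro mpt.intro mpt_axioms.intro ergodic_mpt_axioms.intro) auto
  interpret centered_subcocycle M T "\<lambda>n x. a n x - real n * real_of_ereal A"
    by (rule centered_subcocycle_minus_A[OF assms(3-8)])
  have "{n. \<forall>l\<in>{1..n}. \<bar>a n \<omega> - real n * real_of_ereal A
                            - (a (n - l) ((T ^^ l) \<omega>) - real (n - l) * real_of_ereal A)\<bar> \<le> real l * \<delta> l}
        = {n. \<forall>l\<in>{1..n}. \<bar>a n \<omega> - a (n - l) ((T ^^ l) \<omega>) - real_of_ereal A * real l\<bar>
                            \<le> real l * \<delta> l}" for \<delta> \<omega>
    by (intro Collect_cong ball_cong refl) (simp add: of_nat_diff algebra_simps)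
  then show ?thesis using exists_tolerance_upper_density[OF assms(9)] by simp
qed

end
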